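(* Let Assumption (QNC-RG) hold and $\tau_0:=\frac1{4c_1}$. There is $M>0$, independent of $K,n$, such that for all $K,n\in\mathbb{N}$ with $\tau=T/K\in(0,\tau_0)$ and any iterates $(x_n^k)_{k=0,\dots,K}\subseteq V_n$ solving (RG), the interpolants satisfy $\|\overline{\boldsymbol{x}}_n^\tau\|_{L^p(I,X)\cap_{\boldsymbol{j}}L^\infty(I,Y)}\le M$, $\|\boldsymbol{j}\hat{\boldsymbol{x}}_n^\tau\|_{L^\infty(I,Y)}\le M$, $\|\mathcal{A}\overline{\boldsymbol{x}}_n^\tau\|_{(L^p(I,X)\cap_{\boldsymbol{j}}L^q(I,Y))^*}\le M$, and $\|e_n(\hat{\boldsymbol{x}}_n^\tau-\overline{\boldsymbol{x}}_n^\tau)\|_{L^{q'}(I,V_n^* )}\le\tau(\|\boldsymbol{f}\|_{L^{p'}(I,X^* )}+M)$.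
   Context: Evolution triple $(V,H,j)$: $V$ reflexive Banach, $H$ Hilbert, $j:V\to H$ linear injective bounded with dense range. $I=(0,T)$, $T<\infty$, $1<p\le q<\infty$. $L^p(I,X)\cap_{\boldsymbol{j}}L^q(I,Y):=\{\boldsymbol{x}\in L^p(I,X):\boldsymbol{j}\boldsymbol{x}\in L^q(I,Y)\}$ with norm $\|\boldsymbol{x}\|_{L^p(I,X)}+\|\boldsymbol{j}\boldsymbol{x}\|_{L^q(I,Y)}$, $(\boldsymbol{j}\boldsymbol{x})(t)=j(\boldsymbol{x}(t))$ (similarly with $q=\infty$). Induced operator $\langle\mathcal{A}\boldsymbol{x},\boldsymbol{y}\rangle=\int_I\langle A(t)\boldsymbol{x}(t),\boldsymbol{y}(t)\rangle_X\,dt$. $e_n:V_n\to V_n^*$ is defined by $\langle e_nv,w\rangle_{V_n}=(jv,jw)_Y$. Assumption (QNC-RG): (i) $(V,H,j)$, $(X,Y,j)$ evolution triples with $V\subseteq X$, $\|\cdot\|_V=\|\cdot\|_X$ on $V$, $H\subseteq Y$, $(\cdot,\cdot)_H=(\cdot,\cdot)_Y$ on $H$; $(V_n)$ closed subspaces of $X$ forming a quasi non-conforming approximation of $V$ in $X$: (QNC.1) a dense $D\subseteq V$ such that each $v\in D$ is the $X$-limit of some $v_n\in V_n$; (QNC.2) if $\boldsymbol{x}_n\in L^p(I,V_{m_n})$, $m_n\to\infty$, $\boldsymbol{x}_n\rightharpoonup\boldsymbol{x}$ in $L^p(I,X)$, then $\boldsymbol{x}\in L^p(I,V)$. (ii)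 $x_0\in H$, $x_n^0\in V_n$, $jx_n^0\to x_0$ in $Y$, $\sup_n\|jx_n^0\|_Y\le\|x_0\|_H$. (iii) $\boldsymbol{f}\in L^{p'}(I,X^* )$. (iv) $A(t):X\to X^*$ satisfies (A.1) pseudo-monotone for a.e. $t$; (A.2) $t\mapsto A(t)x$ Bochner measurable; (A.3) $\langle A(t)x,x\rangle_X\ge c_0\|x\|_X^p-c_1\|jx\|_Y^2-c_2$ ($c_0>0$, $c_1,c_2\ge0$); (A.4) $|\langle A(t)x,y\rangle_X|\le\lambda\|x\|_X^p+\gamma[1+\|jx\|_Y^q+\|jy\|_Y^q+\|y\|_X^p]$ ($\gamma\ge0$, $\lambda\in(0,c_0)$). Scheme (RG): for $\tau=T/K$, $I_k^\tau=((k-1)\tau,k\tau]$, $[\boldsymbol{f}]_k^\tau=\frac1\tau\int_{I_k^\tau}\boldsymbol{f}$, $[A]_k^\tau x=\frac1\tau\int_{I_k^\tau}A(s)x\,ds$, $d_\tau x^k=\frac1\tau(x^k-x^{k-1})$: starting from $x_n^0$, $x_n^k\in V_n$ with $(d_\tau jx_n^k,jv_n)_Y+\langle[A]_k^\tau x_n^k,v_n\rangle_X=\langle[\boldsymbol{f}]_k^\tau,v_n\rangle_X$ for all $v_n\in V_n$. Interpolants: for $t\in I_k^\tau$, $\overline{\boldsymbol{x}}_n^\tau(t)=x_n^k$ and $\hat{\boldsymbol{x}}_n^\tau(t)=(\frac t\tau-(k-1))x_n^k+(k-\frac t\tau)x_n^{k-1}$. *)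

theory Defs
  imports "HOL-Analysis.Analysis"
begin

text \<open>The dual X* of a real normed space is modelled by the type of bounded
linear functionals (blinfun type) with the operator norm; the duality pairing
is function application.\<close>

definition reflexive_space :: "'x::real_normed_vector itself \<Rightarrow> bool" where
  "reflexive_space _ \<longleftrightarrow>
     (\<forall>\<Phi> :: ('x \<Rightarrow>\<^sub>L real) \<Rightarrow>\<^sub>L real. \<exists>x::'x. \<forall>\<phi>. blinfun_apply \<Phi> \<phi> = blinfun_apply \<phi> x)"

definition weak_conv :: "(nat \<Rightarrow> 'x::real_normed_vector) \<Rightarrow> 'x \<Rightarrow> bool" where
  "weak_conv xs x \<longleftrightarrow>
     (\<forall>\<phi> :: 'x \<Rightarrow>\<^sub>L real. (\<lambda>n. blinfun_apply \<phi> (xs n)) \<longlonglongrightarrow> blinfun_apply \<phi> x)"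

definition pseudo_monotone :: "('x::real_normed_vector \<Rightarrow> ('x \<Rightarrow>\<^sub>L real)) \<Rightarrow> bool" where
  "pseudo_monotone B \<longleftrightarrow>
     (\<forall>xs x. weak_conv xs x \<and>
        limsup (\<lambda>n. ereal (blinfun_apply (B (xs n)) (xs n - x))) \<le> 0 \<longrightarrow>
        (\<forall>y. ereal (blinfun_apply (B x) (x - y))
               \<le> liminf (\<lambda>n. ereal (blinfun_apply (B (xs n)) (xs n - y)))))"

definition bochner_measurable :: "real \<Rightarrow> (real \<Rightarrow> 'a::real_normed_vector) \<Rightarrow> bool" where
  "bochner_measurable T u \<longleftrightarrow>
     (\<exists>s :: nat \<Rightarrow> real \<Rightarrow> 'a.
        (\<forall>i. finite (s i ` {0<..<T}) \<and>
             s i \<in> borel_measurable (restrict_space lebesgue {0<..<T})) \<and>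
        (AE t in lebesgue. t \<in> {0<..<T} \<longrightarrow> (\<lambda>i. s i t) \<longlonglongrightarrow> u t))"

definition Lp_int :: "real \<Rightarrow> real \<Rightarrow> (real \<Rightarrow> 'a::real_normed_vector) \<Rightarrow> ennreal" where
  "Lp_int p T u = (\<integral>\<^sup>+ t \<in> {0<..<T}. ennreal (norm (u t) powr p) \<partial>lebesgue)"

definition Lp :: "real \<Rightarrow> real \<Rightarrow> (real \<Rightarrow> 'a::real_normed_vector) set" where
  "Lp p T = {u. bochner_measurable T u \<and> Lp_int p T u < \<infinity>}"

definition Lp_norm :: "real \<Rightarrow> real \<Rightarrow> (real \<Rightarrow> 'a::real_normed_vector) \<Rightarrow> real" where
  "Lp_norm p T u = enn2real (Lp_int p T u) powr (1 / p)"

definition Linf_norm :: "real \<Rightarrow> (real \<Rightarrow> 'a::real_normed_vector) \<Rightarrow> real" where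
  "Linf_norm T u = Inf {C. 0 \<le> C \<and> (AE t in lebesgue. t \<in> {0<..<T} \<longrightarrow> norm (u t) \<le> C)}"

definition LpV :: "real \<Rightarrow> real \<Rightarrow> 'a::real_normed_vector set \<Rightarrow> (real \<Rightarrow> 'a) set" where
  "LpV p T V = {u \<in> Lp p T. AE t in lebesgue. t \<in> {0<..<T} \<longrightarrow> u t \<in> V}"

definition Lp_functional :: "real \<Rightarrow> real \<Rightarrow> ((real \<Rightarrow> 'a::real_normed_vector) \<Rightarrow> real) \<Rightarrow> bool" where
  "Lp_functional p T \<Phi> \<longleftrightarrow>
     (\<forall>u\<in>Lp p T. \<forall>v\<in>Lp p T. \<Phi> (\<lambda>t. u t + v t) = \<Phi> u + \<Phi> v) \<and>
     (\<forall>c. \<forall>u\<in>Lp p T. \<Phi> (\<lambda>t. c *\<^sub>R u t) = c * \<Phi> u) \<and>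
     (\<exists>C. \<forall>u\<in>Lp p T. \<bar>\<Phi> u\<bar> \<le> C * Lp_norm p T u)"

definition Lp_weak_conv :: "real \<Rightarrow> real \<Rightarrow> (nat \<Rightarrow> real \<Rightarrow> 'a::real_normed_vector) \<Rightarrow> (real \<Rightarrow> 'a) \<Rightarrow> bool" where
  "Lp_weak_conv p T xs x \<longleftrightarrow>
     (\<forall>i. xs i \<in> Lp p T) \<and> x \<in> Lp p T \<and>
     (\<forall>\<Phi>. Lp_functional p T \<Phi> \<longrightarrow> (\<lambda>i. \<Phi> (xs i)) \<longlonglongrightarrow> \<Phi> x)"

definition LpLq :: "real \<Rightarrow> real \<Rightarrow> real \<Rightarrow> ('x::real_normed_vector \<Rightarrow> 'y::real_normed_vector)
                     \<Rightarrow> (real \<Rightarrow> 'x) set" where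
  "LpLq p q T j = {u \<in> Lp p T. (\<lambda>t. j (u t)) \<in> Lp q T}"

definition LpLq_norm :: "real \<Rightarrow> real \<Rightarrow> real \<Rightarrow> ('x::real_normed_vector \<Rightarrow> 'y::real_normed_vector)
                     \<Rightarrow> (real \<Rightarrow> 'x) \<Rightarrow> real" where
  "LpLq_norm p q T j u = Lp_norm p T u + Lp_norm q T (\<lambda>t. j (u t))"

definition LpLinf_norm :: "real \<Rightarrow> real \<Rightarrow> ('x::real_normed_vector \<Rightarrow> 'y::real_normed_vector)
                     \<Rightarrow> (real \<Rightarrow> 'x) \<Rightarrow> real" where
  "LpLinf_norm p T j u = Lp_norm p T u + Linf_norm T (\<lambda>t. j (u t))"

text \<open>Dual norm in V_n* of e_n v, where <e_n v, w> = (j v, j w)_Y.\<close>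
definition en_norm :: "('x::real_normed_vector \<Rightarrow> 'y::real_inner) \<Rightarrow> 'x set \<Rightarrow> 'x \<Rightarrow> real" where
  "en_norm j W v = Sup {\<bar>inner (j v) (j w)\<bar> | w. w \<in> W \<and> norm w \<le> 1}"

definition I_k :: "real \<Rightarrow> nat \<Rightarrow> real set" where
  "I_k \<tau> k = {(real k - 1) * \<tau> <.. real k * \<tau>}"

definition avg_f :: "real \<Rightarrow> nat \<Rightarrow> (real \<Rightarrow> ('x::real_normed_vector \<Rightarrow>\<^sub>L real)) \<Rightarrow> 'x \<Rightarrow> real" where
  "avg_f \<tau> k f v = (1 / \<tau>) * (LINT s : I_k \<tau> k | lebesgue. blinfun_apply (f s) v)"

definition avg_A :: "real \<Rightarrow> nat \<Rightarrow> (real \<Rightarrow> 'x::real_normed_vector \<Rightarrow> ('x \<Rightarrow>\<^sub>L real)) \<Rightarrow> 'x \<Rightarrow> 'x \<Rightarrow> real" where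
  "avg_A \<tau> k A x v = (1 / \<tau>) * (LINT s : I_k \<tau> k | lebesgue. blinfun_apply (A s x) v)"

definition RG_solution ::
  "('x::real_normed_vector \<Rightarrow> 'y::real_inner) \<Rightarrow> (real \<Rightarrow> 'x \<Rightarrow> ('x \<Rightarrow>\<^sub>L real))
   \<Rightarrow> (real \<Rightarrow> ('x \<Rightarrow>\<^sub>L real)) \<Rightarrow> 'x set \<Rightarrow> real \<Rightarrow> nat \<Rightarrow> 'x \<Rightarrow> (nat \<Rightarrow> 'x) \<Rightarrow> bool" where
  "RG_solution j A f W \<tau> K x0 xs \<longleftrightarrow>
     xs 0 = x0 \<and> (\<forall>k\<le>K. xs k \<in> W) \<and>
     (\<forall>k\<in>{1..K}. \<forall>v\<in>W.
        inner ((1 / \<tau>) *\<^sub>R (j (xs k) - j (xs (k - 1)))) (j v) + avg_A \<tau> k A (xs k) v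
        = avg_f \<tau> k f v)"

text \<open>Piecewise constant interpolant: equals x^k on ((k-1)\<tau>, k\<tau>].\<close>
definition xbar :: "real \<Rightarrow> (nat \<Rightarrow> 'x::real_normed_vector) \<Rightarrow> real \<Rightarrow> 'x" where
  "xbar \<tau> xs t = xs (nat \<lceil>t / \<tau>\<rceil>)"

definition xhat :: "real \<Rightarrow> (nat \<Rightarrow> 'x::real_normed_vector) \<Rightarrow> real \<Rightarrow> 'x" where
  "xhat \<tau> xs t = (let k = nat \<lceil>t / \<tau>\<rceil> in
      (t / \<tau> - (real k - 1)) *\<^sub>R xs k + (real k - t / \<tau>) *\<^sub>R xs (k - 1))"

end

theory Submission
  imports Defs
begin

text \<open>
  Testing the scheme with \<open>v = x\<^sup>k\<close> and using
  \<open>(j x\<^sup>k - j x\<^sup>k\<^sup>-\<^sup>1, j x\<^sup>k) \<ge> (|j x\<^sup>k|\<^sup>2 - |j x\<^sup>k\<^sup>-\<^sup>1|\<^sup>2) / 2\<close>,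
  the coercivity (A.3) and Young's inequality for the right-hand side gives a one-step energy
  inequality. Because \<open>4 c\<^sub>1 \<tau> < 1\<close> it can be iterated (discrete Gronwall), which bounds
  \<open>|j x\<^sup>k|\<close> uniformly and, summed over k, also \<open>\<tau> \<Sum> \<parallel>x\<^sup>k\<parallel>\<^sup>p\<close>; the first two estimates
  follow, since the affine interpolant is a convex combination of consecutive iterates.
  Applying the growth bound (A.4) to \<open>s y\<close> and optimising over \<open>s > 0\<close> bounds the pairing
  of \<open>A x\<close> with y by \<open>\<parallel>y\<parallel>\<^sub>L\<^sub>p + \<parallel>j y\<parallel>\<^sub>L\<^sub>q\<close>. Finally, on each cell the difference of
  the interpolants is a multiple (at most 1) of \<open>x\<^sup>k\<^sup>-\<^sup>1 - x\<^sup>k\<close>, which the scheme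
  expresses through \<open>\<tau> ([f]\<^sub>k - [A]\<^sub>k x\<^sup>k)\<close>; bounding this functional on the unit
  ball of \<open>V\<^sub>n\<close> and integrating gives the last estimate.
\<close>

section \<open>Measurability and integrals on (0, T)\<close>

lemma AE_lebesgue_neq: "AE t in lebesgue. t \<noteq> (c::real)"
  by (rule AE_completion) (rule AE_lborel_singleton)

lemma bochner_measurable_comp_AE_eq_measurable:
  fixes u :: "real \<Rightarrow> 'a::real_normed_vector"
    and g :: "'a \<Rightarrow> 'b::{banach, second_countable_topology}"
  assumes u: "bochner_measurable T u" and g: "continuous_on UNIV g"
  obtains G where "G \<in> borel_measurable lebesgue"
    and "AE t in lebesgue. t \<in> {0<..<T} \<longrightarrow> g (u t) = G t"
proof -
  obtain s :: "nat \<Rightarrow> real \<Rightarrow> 'a" where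
    s: "\<And>i. s i \<in> borel_measurable (restrict_space lebesgue {0<..<T})"
    and s_lim: "AE t in lebesgue. t \<in> {0<..<T} \<longrightarrow> (\<lambda>i. s i t) \<longlonglongrightarrow> u t"
    using u unfolding bochner_measurable_def by blast
  define h where "h i t = (if t \<in> {0<..<T} then g (s i t) else 0)" for i t
  have h: "h i \<in> borel_measurable lebesgue" for i
  proof -
    have "(\<lambda>t. g (s i t)) \<in> borel_measurable (restrict_space lebesgue {0<..<T})"
      by (rule borel_measurable_continuous_on[OF g s])
    then show ?thesis
      unfolding h_def by (subst (asm) measurable_restrict_space_iff) simp_all
  qed
  show ?thesis
  proof (rule that)
    show "(\<lambda>t. lim (\<lambda>i. h i t)) \<in> borel_measurable lebesgue"
      using h by (rule borel_measurable_lim_metric)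
    show "AE t in lebesgue. t \<in> {0<..<T} \<longrightarrow> g (u t) = lim (\<lambda>i. h i t)"
      using s_lim
    proof eventually_elim
      case (elim t)
      show ?case
      proof
        assume t: "t \<in> {0<..<T}"
        have "(\<lambda>i. g (s i t)) \<longlonglongrightarrow> g (u t)"
          using g elim t by (metis continuous_on_eq_continuous_at isCont_tendsto_compose open_UNIV UNIV_I)
        then have "(\<lambda>i. h i t) \<longlonglongrightarrow> g (u t)"
          using t by (simp add: h_def)
        then show "g (u t) = lim (\<lambda>i. h i t)"
          by (rule limI[symmetric])
      qed
    qed
  qed
qed

lemma bochner_measurable_norm_AE_eq_measurable:
  fixes u :: "real \<Rightarrow> 'a::real_normed_vector"
  assumes "bochner_measurable T u"
  obtains G where "G \<in> borel_measurable lebesgue" and "\<And>t. 0 \<le> G t"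
    and "AE t in lebesgue. t \<in> {0<..<T} \<longrightarrow> norm (u t) = G t"
proof -
  have "continuous_on UNIV (norm :: 'a \<Rightarrow> real)"
    by (intro continuous_intros)
  then obtain G where G: "G \<in> borel_measurable lebesgue"
    "AE t in lebesgue. t \<in> {0<..<T} \<longrightarrow> norm (u t) = G t"
    using bochner_measurable_comp_AE_eq_measurable[OF assms] by blast
  show ?thesis
  proof (rule that)
    show "(\<lambda>t. \<bar>G t\<bar>) \<in> borel_measurable lebesgue"
      using G(1) by measurable
    show "AE t in lebesgue. t \<in> {0<..<T} \<longrightarrow> norm (u t) = \<bar>G t\<bar>"
      using G(2) by eventually_elim (metis abs_norm_cancel)
  qed simp
qed

lemma Lp_int_AE_cong:
  assumes "AE t in lebesgue. t \<in> {0<..<T} \<longrightarrow> norm (u t) = G t"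
  shows "Lp_int r T u = (\<integral>\<^sup>+ t \<in> {0<..<T}. ennreal (G t powr r) \<partial>lebesgue)"
  unfolding Lp_int_def
  by (intro nn_integral_cong_AE) (use assms in \<open>eventually_elim, simp split: split_indicator\<close>)

lemma Lp_norm_representative:
  fixes u :: "real \<Rightarrow> 'a::real_normed_vector"
  assumes u: "u \<in> Lp r T" and r: "0 < r"
  obtains G where "G \<in> borel_measurable lebesgue" and "\<And>t. 0 \<le> G t"
    and "AE t in lebesgue. t \<in> {0<..<T} \<longrightarrow> norm (u t) = G t"
    and "(\<integral>\<^sup>+ t \<in> {0<..<T}. ennreal (G t powr r) \<partial>lebesgue) = ennreal (Lp_norm r T u powr r)"
proof -
  obtain G where G: "G \<in> borel_measurable lebesgue" "\<And>t. 0 \<le> G t"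
    "AE t in lebesgue. t \<in> {0<..<T} \<longrightarrow> norm (u t) = G t"
    using bochner_measurable_norm_AE_eq_measurable u unfolding Lp_def by blast
  have "(\<integral>\<^sup>+ t \<in> {0<..<T}. ennreal (G t powr r) \<partial>lebesgue) = Lp_int r T u"
    using Lp_int_AE_cong[OF G(3)] by simp
  also have "\<dots> = ennreal (enn2real (Lp_int r T u))"
    using u unfolding Lp_def by (simp add: less_top)
  also have "enn2real (Lp_int r T u) = Lp_norm r T u powr r"
    unfolding Lp_norm_def using r by (simp add: powr_powr)
  finally show ?thesis
    using G that by blast
qed

lemma Linf_norm_le:
  assumes "0 \<le> C" and "AE t in lebesgue. t \<in> {0<..<T} \<longrightarrow> norm (u t) \<le> C"
  shows "Linf_norm T u \<le> C"
  unfolding Linf_norm_def using assms by (intro cInf_lower bdd_belowI[where m=0]) auto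

text \<open>No integrability assumption is needed: a non-integrable function has Bochner integral 0.\<close>

lemma abs_set_integral_le_nn_integral:
  fixes g :: "'a \<Rightarrow> real"
  assumes "(\<integral>\<^sup>+ t \<in> S. ennreal \<bar>g t\<bar> \<partial>M) \<le> ennreal r" and "0 \<le> r"
  shows "\<bar>LINT t : S | M. g t\<bar> \<le> r"
proof (cases "integrable M (\<lambda>t. indicator S t *\<^sub>R g t)")
  case True
  have "ennreal (norm (integral\<^sup>L M (\<lambda>t. indicator S t *\<^sub>R g t)))
      \<le> (\<integral>\<^sup>+ t. norm (indicator S t *\<^sub>R g t) \<partial>M)"
    by (rule integral_norm_bound_ennreal[OF True])
  also have "\<dots> = (\<integral>\<^sup>+ t \<in> S. ennreal \<bar>g t\<bar> \<partial>M)"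
    by (intro nn_integral_cong) (simp split: split_indicator)
  also have "\<dots> \<le> ennreal r"
    by (rule assms(1))
  finally show ?thesis
    using assms(2) unfolding set_lebesgue_integral_def by (simp add: ennreal_le_iff)
next
  case False
  then show ?thesis
    using assms(2) unfolding set_lebesgue_integral_def by (simp add: not_integrable_integral_eq)
qed

lemma set_nn_integral_add_scaled:
  fixes H1 H2 :: "'a \<Rightarrow> real"
  assumes [measurable]: "S \<in> sets M" "H1 \<in> borel_measurable M" "H2 \<in> borel_measurable M"
    and H_nonneg: "\<And>t. 0 \<le> H1 t" "\<And>t. 0 \<le> H2 t"
    and H1_int: "(\<integral>\<^sup>+ t \<in> S. ennreal (H1 t) \<partial>M) = ennreal h1"
    and H2_int: "(\<integral>\<^sup>+ t \<in> S. ennreal (H2 t) \<partial>M) = ennreal h2"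
    and nonneg: "0 \<le> a" "0 \<le> b" "0 \<le> h1" "0 \<le> h2"
  shows "(\<integral>\<^sup>+ t \<in> S. ennreal (a * H1 t + b * H2 t) \<partial>M) = ennreal (a * h1 + b * h2)"
proof -
  have "(\<integral>\<^sup>+ t \<in> S. ennreal (a * H1 t + b * H2 t) \<partial>M)
      = (\<integral>\<^sup>+ t. ennreal a * (ennreal (H1 t) * indicator S t)
               + ennreal b * (ennreal (H2 t) * indicator S t) \<partial>M)"
    using nonneg H_nonneg
    by (intro nn_integral_cong) (simp add: ennreal_plus ennreal_mult distrib_right mult.assoc)
  also have "\<dots> = ennreal a * ennreal h1 + ennreal b * ennreal h2"
    using H1_int H2_int by (subst nn_integral_add) (simp_all add: nn_integral_cmult)
  also have "\<dots> = ennreal (a * h1 + b * h2)"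
    using nonneg by (simp add: ennreal_plus ennreal_mult)
  finally show ?thesis .
qed

lemma abs_set_integral_le_affine_bound:
  fixes g H :: "'a \<Rightarrow> real"
  assumes [measurable]: "S \<in> sets M" "H \<in> borel_measurable M"
    and S_measure: "emeasure M S = ennreal \<tau>" "0 \<le> \<tau>"
    and H_nonneg: "\<And>t. 0 \<le> H t"
    and H_int: "(\<integral>\<^sup>+ t \<in> S. ennreal (H t) \<partial>M) = ennreal h" "0 \<le> h"
    and nonneg: "0 \<le> a" "0 \<le> b"
    and g_bound: "AE t in M. t \<in> S \<longrightarrow> \<bar>g t\<bar> \<le> a + b * H t"
  shows "\<bar>LINT t : S | M. g t\<bar> \<le> a * \<tau> + b * h"
proof (rule abs_set_integral_le_nn_integral)
  have one_int: "(\<integral>\<^sup>+ t \<in> S. ennreal 1 \<partial>M) = ennreal \<tau>"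
    using S_measure by simp
  have "(\<integral>\<^sup>+ t \<in> S. ennreal \<bar>g t\<bar> \<partial>M) \<le> (\<integral>\<^sup>+ t \<in> S. ennreal (a * 1 + b * H t) \<partial>M)"
    by (intro nn_integral_mono_AE)
       (use g_bound in \<open>eventually_elim, simp add: ennreal_leI split: split_indicator\<close>)
  also have "\<dots> = ennreal (a * \<tau> + b * h)"
    by (rule set_nn_integral_add_scaled[OF _ _ _ _ H_nonneg one_int H_int(1)])
       (use nonneg S_measure H_int in simp_all)
  finally show "(\<integral>\<^sup>+ t \<in> S. ennreal \<bar>g t\<bar> \<partial>M) \<le> ennreal (a * \<tau> + b * h)" .
  show "0 \<le> a * \<tau> + b * h"
    using nonneg S_measure H_int by simp
qed

lemma abs_set_integral_le_const:
  fixes g :: "'a \<Rightarrow> real"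
  assumes "S \<in> sets M" "emeasure M S = ennreal \<tau>" "0 \<le> \<tau>" "0 \<le> a"
    and "AE t in M. t \<in> S \<longrightarrow> \<bar>g t\<bar> \<le> a"
  shows "\<bar>LINT t : S | M. g t\<bar> \<le> a * \<tau>"
  using abs_set_integral_le_affine_bound[of S M "\<lambda>_. 0" \<tau> 0 a 0 g] assms by simp

lemma set_integral_ge_const_mult_measure:
  fixes g a :: "real \<Rightarrow> real"
  assumes S[measurable]: "S \<in> sets lebesgue" and S_measure: "emeasure lebesgue S = ennreal \<tau>" "0 \<le> \<tau>"
    and a[measurable]: "a \<in> borel_measurable lebesgue"
    and g_eq: "AE t in lebesgue. t \<in> S \<longrightarrow> g t = a t"
    and g_bdd: "AE t in lebesgue. t \<in> S \<longrightarrow> \<bar>g t\<bar> \<le> L"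
    and g_ge: "AE t in lebesgue. t \<in> S \<longrightarrow> c \<le> g t"
  shows "c * \<tau> \<le> (LINT t : S | lebesgue. g t)"
proof -
  have "(\<lambda>t. indicator S t * g t) \<in> borel_measurable lebesgue"
    by (rule borel_measurable_AE[of "\<lambda>t. indicator S t * a t"])
       (use g_eq in \<open>measurable, eventually_elim, simp split: split_indicator\<close>)
  then have "set_integrable lebesgue S g"
    unfolding set_integrable_def using S_measure g_bdd
    by (intro integrableI_bounded_set[where A=S and B=L])
       (auto elim!: AE_mp intro!: AE_I2 simp: indicator_def)
  moreover have "set_integrable lebesgue S (\<lambda>_. c)"
    unfolding set_integrable_def using S_measure by (intro integrable_indicator) simp_all
  ultimately have "(LINT t : S | lebesgue. c) \<le> (LINT t : S | lebesgue. g t)"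
    using g_ge by (intro set_integral_mono_AE) auto
  moreover have "(LINT t : S | lebesgue. c) = c * \<tau>"
    using S_measure by (simp add: set_integral_const measure_def)
  ultimately show ?thesis by simp
qed

section \<open>Elementary inequalities\<close>

lemma young_le_powr_add:
  fixes a b p :: real
  assumes "0 \<le> a" "0 \<le> b" "1 < p"
  shows "a * b \<le> a powr p + b powr (p / (p - 1))"
proof -
  have p': "1 < p / (p - 1)" "1 / p + 1 / (p / (p - 1)) = 1"
    using assms(3) by (simp_all add: field_simps)
  have "a * b \<le> a powr p / p + b powr (p / (p - 1)) / (p / (p - 1))"
    by (rule Youngs_inequality[OF assms(3) p' assms(1,2)])
  also have "\<dots> \<le> a powr p + b powr (p / (p - 1))"
    using assms(3) p'(1) divide_left_mono[of 1 p "a powr p"]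
      divide_left_mono[of 1 "p / (p - 1)" "b powr (p / (p - 1))"]
    by (intro add_mono) auto
  finally show ?thesis .
qed

lemma young_le_powr_add_weighted:
  fixes a b p e :: real
  assumes "0 \<le> a" "0 \<le> b" "1 < p" "0 < e"
  shows "a * b \<le> e powr p * a powr p + e powr (- (p / (p - 1))) * b powr (p / (p - 1))"
proof -
  have "a * b = (e * a) * (b / e)"
    using assms(4) by simp
  also have "\<dots> \<le> (e * a) powr p + (b / e) powr (p / (p - 1))"
    using assms by (intro young_le_powr_add) auto
  also have "\<dots> = e powr p * a powr p + e powr (- (p / (p - 1))) * b powr (p / (p - 1))"
    using assms by (simp add: powr_mult powr_divide powr_minus_divide)
  finally show ?thesis .
qed

lemma inner_diff_self_ge:
  fixes u w :: "'a::real_inner"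
  shows "((norm u)\<^sup>2 - (norm w)\<^sup>2) / 2 \<le> inner (u - w) u"
proof -
  have "0 \<le> (norm (u - w))\<^sup>2"
    by simp
  then show ?thesis
    by (simp add: power2_norm_eq_inner inner_diff_left inner_diff_right inner_commute)
qed

lemma discrete_gronwall:
  fixes e g :: "nat \<Rightarrow> real" and b :: real
  assumes b: "1 \<le> b" and g: "\<And>k. 0 \<le> g k"
    and step: "\<And>k. 1 \<le> k \<Longrightarrow> k \<le> K \<Longrightarrow> e k \<le> b * (e (k - 1) + g k)"
  shows "k \<le> K \<Longrightarrow> e k \<le> b ^ k * (e 0 + (\<Sum>i = 1..k. g i))"
proof (induction k)
  case 0
  then show ?case by simp
next
  case (Suc m)
  have "e (Suc m) \<le> b * (e m + g (Suc m))"
    using step[of "Suc m"] Suc.prems by simp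
  also have "\<dots> \<le> b * (b ^ m * (e 0 + (\<Sum>i = 1..m. g i)) + g (Suc m))"
    using Suc b by (intro mult_left_mono) auto
  also have "\<dots> \<le> b ^ Suc m * (e 0 + (\<Sum>i = 1..m. g i)) + b ^ Suc m * g (Suc m)"
    using b g[of "Suc m"] mult_right_mono[OF one_le_power[OF b, of m], of "g (Suc m)"]
    by (simp add: algebra_simps mult_left_mono)
  also have "\<dots> = b ^ Suc m * (e 0 + (\<Sum>i = 1..Suc m. g i))"
    by (simp add: algebra_simps)
  finally show ?case .
qed

lemma inverse_powr_mult_powr_le:
  fixes a D r :: real
  assumes "0 \<le> a" "a \<le> D" "0 < D" "0 \<le> r"
  shows "(1 / D) powr (r - 1) * a powr r \<le> D"
proof -
  have "(1 / D) powr (r - 1) * a powr r \<le> (1 / D) powr (r - 1) * D powr r"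
    using assms by (intro mult_left_mono powr_mono2) auto
  also have "\<dots> = D"
    using assms(3) by (simp add: powr_divide powr_diff)
  finally show ?thesis .
qed

lemma le_of_scaled_bounds:
  fixes X C \<gamma> a b p q :: real
  assumes bound: "\<And>s. 0 < s \<Longrightarrow>
      X \<le> C / s + \<gamma> * (s powr (p - 1) * a powr p + s powr (q - 1) * b powr q)"
    and nonneg: "0 \<le> C" "0 \<le> \<gamma>" "0 \<le> a" "0 \<le> b" "0 \<le> p" "0 \<le> q"
  shows "X \<le> (C + 2 * \<gamma>) * (a + b)"
proof (rule field_le_epsilon)
  fix e :: real
  assume e: "0 < e"
  define \<delta> where "\<delta> = e / (C + 2 * \<gamma> + 1)"
  define D where "D = a + b + \<delta>"
  have \<delta>: "0 < \<delta>" "(C + 2 * \<gamma>) * \<delta> \<le> e"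
    unfolding \<delta>_def using e nonneg by (simp_all add: field_simps)
  have D: "0 < D" "a \<le> D" "b \<le> D"
    unfolding D_def using \<delta> nonneg by auto
  have "X \<le> C / (1 / D) + \<gamma> * ((1 / D) powr (p - 1) * a powr p + (1 / D) powr (q - 1) * b powr q)"
    using bound[of "1 / D"] D by simp
  also have "\<dots> \<le> C * D + \<gamma> * (D + D)"
    using D nonneg inverse_powr_mult_powr_le[of a D p] inverse_powr_mult_powr_le[of b D q]
    by (intro add_mono mult_left_mono) auto
  also have "\<dots> = (C + 2 * \<gamma>) * (a + b) + (C + 2 * \<gamma>) * \<delta>"
    unfolding D_def by (simp add: algebra_simps)
  finally show "X \<le> (C + 2 * \<gamma>) * (a + b) + e"
    using \<delta> by linarith
qed

lemma blinfun_abs_le_scaled: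
  fixes \<phi> :: "'x::real_normed_vector \<Rightarrow>\<^sub>L real" and j :: "'x \<Rightarrow> 'y::real_normed_vector"
  assumes j: "linear j"
    and bound: "\<And>y. \<bar>blinfun_apply \<phi> y\<bar> \<le> \<alpha> + \<gamma> * (norm y powr p + norm (j y) powr q)"
    and s: "0 < s"
  shows "\<bar>blinfun_apply \<phi> y\<bar>
           \<le> \<alpha> / s + \<gamma> * (s powr (p - 1) * norm y powr p + s powr (q - 1) * norm (j y) powr q)"
proof -
  have s_powr: "s powr p = s * s powr (p - 1)" "s powr q = s * s powr (q - 1)"
    using s by (simp_all add: powr_diff)
  have "s * \<bar>blinfun_apply \<phi> y\<bar> = \<bar>blinfun_apply \<phi> (s *\<^sub>R y)\<bar>"
    using s by (simp add: blinfun.scaleR_right abs_mult)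
  also have "\<dots> \<le> \<alpha> + \<gamma> * (norm (s *\<^sub>R y) powr p + norm (j (s *\<^sub>R y)) powr q)"
    by (rule bound)
  also have "\<dots> = \<alpha> + s * (\<gamma> * (s powr (p - 1) * norm y powr p + s powr (q - 1) * norm (j y) powr q))"
    using s by (simp add: linear_scale[OF j] powr_mult s_powr algebra_simps)
  finally show ?thesis
    using s by (simp add: field_simps)
qed

section \<open>The time grid\<close>

lemma lebesgue_measurable_ident [measurable]: "(\<lambda>x::real. x) \<in> borel_measurable lebesgue"
  by (intro measurable_completion) simp

lemma I_k_measurable [measurable]: "I_k \<tau> k \<in> sets lebesgue"
  unfolding I_k_def by simp

lemma emeasure_I_k: "0 < \<tau> \<Longrightarrow> emeasure lebesgue (I_k \<tau> k) = ennreal \<tau>"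
  unfolding I_k_def by (simp add: algebra_simps)

lemma I_k_subset:
  assumes "0 < \<tau>" "\<tau> = T / real K" "k \<in> {1..K}"
  shows "I_k \<tau> k \<subseteq> {0<..T}"
proof -
  have "real K * \<tau> = T"
    using assms(1,2) by (cases "K = 0") auto
  moreover have "0 \<le> (real k - 1) * \<tau>" "real k * \<tau> \<le> real K * \<tau>"
    using assms(1,3) by (auto intro: mult_right_mono)
  ultimately show ?thesis
    unfolding I_k_def by auto
qed

lemma AE_I_k_imp_interval:
  assumes "0 < \<tau>" "\<tau> = T / real K" "k \<in> {1..K}"
  shows "AE t in lebesgue. t \<in> I_k \<tau> k \<longrightarrow> t \<in> {0<..<T}"
  using AE_lebesgue_neq[of T]
  by eventually_elim (use I_k_subset[OF assms] in \<open>auto simp: subset_iff\<close>)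

lemma mem_I_k_iff_ceiling:
  assumes "0 < \<tau>" "1 \<le> k"
  shows "t \<in> I_k \<tau> k \<longleftrightarrow> 0 < t \<and> nat \<lceil>t / \<tau>\<rceil> = k"
proof -
  have "t \<in> I_k \<tau> k \<longleftrightarrow> \<lceil>t / \<tau>\<rceil> = int k"
    unfolding I_k_def ceiling_eq_iff using assms by (auto simp: field_simps)
  also have "\<dots> \<longleftrightarrow> 0 < t / \<tau> \<and> nat \<lceil>t / \<tau>\<rceil> = k"
    using assms(2) one_le_ceiling[of "t / \<tau>"] by (auto simp del: one_le_ceiling)
  also have "\<dots> \<longleftrightarrow> 0 < t \<and> nat \<lceil>t / \<tau>\<rceil> = k"
    using assms(1) by (simp add: zero_less_divide_iff)
  finally show ?thesis .
qed

lemma ceiling_grid_index: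
  assumes "0 < \<tau>" "\<tau> = T / real K" "t \<in> {0<..<T}"
  shows "real (nat \<lceil>t / \<tau>\<rceil>) - 1 < t / \<tau>" "t / \<tau> \<le> real (nat \<lceil>t / \<tau>\<rceil>)"
    and "nat \<lceil>t / \<tau>\<rceil> \<in> {1..K}"
proof -
  have "T = real K * \<tau>"
    using assms(1,2) by (cases "K = 0") auto
  then have "0 < t / \<tau>" "t / \<tau> \<le> real K"
    using assms(1,3) by (simp_all add: pos_divide_le_eq)
  then show "real (nat \<lceil>t / \<tau>\<rceil>) - 1 < t / \<tau>" "t / \<tau> \<le> real (nat \<lceil>t / \<tau>\<rceil>)"
    and "nat \<lceil>t / \<tau>\<rceil> \<in> {1..K}"
    by (auto simp: ceiling_le_iff) linarith+
qed

lemma nn_integral_interval_eq_sum_I_k: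
  assumes "0 < \<tau>" "\<tau> = T / real K" and [measurable]: "h \<in> borel_measurable lebesgue"
  shows "(\<Sum>k = 1..K. \<integral>\<^sup>+ t \<in> I_k \<tau> k. h t \<partial>lebesgue) = (\<integral>\<^sup>+ t \<in> {0<..<T}. h t \<partial>lebesgue)"
proof -
  have "(\<Sum>k = 1..K. h t * indicator (I_k \<tau> k) t) = h t * indicator {0<..<T} t"
    if "t \<noteq> T" for t
  proof (cases "t \<in> {0<..<T}")
    case True
    have "(\<Sum>k = 1..K. h t * indicator (I_k \<tau> k) t)
        = (\<Sum>k = 1..K. if k = nat \<lceil>t / \<tau>\<rceil> then h t else 0)"
      using mem_I_k_iff_ceiling[OF assms(1)] True by (intro sum.cong) (auto simp: indicator_def)
    then show ?thesis
      using True ceiling_grid_index(3)[OF assms(1,2) True] by simp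
  next
    case False
    then have "t \<notin> I_k \<tau> k" if "k \<in> {1..K}" for k
      using I_k_subset[OF assms(1,2) that] \<open>t \<noteq> T\<close> by auto
    then show ?thesis
      using False by simp
  qed
  then have "(\<integral>\<^sup>+ t. (\<Sum>k = 1..K. h t * indicator (I_k \<tau> k) t) \<partial>lebesgue)
      = (\<integral>\<^sup>+ t \<in> {0<..<T}. h t \<partial>lebesgue)"
    by (intro nn_integral_cong_AE) (use AE_lebesgue_neq[of T] in \<open>eventually_elim, simp\<close>)
  then show ?thesis
    by (subst nn_integral_sum[symmetric]) simp_all
qed

lemma nn_integral_grid_step_function:
  assumes "0 < \<tau>" "\<tau> = T / real K"
  shows "(\<integral>\<^sup>+ t \<in> {0<..<T}. c (nat \<lceil>t / \<tau>\<rceil>) \<partial>lebesgue) = (\<Sum>k = 1..K. ennreal \<tau> * c k)"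
proof -
  have "(\<integral>\<^sup>+ t \<in> I_k \<tau> k. c (nat \<lceil>t / \<tau>\<rceil>) \<partial>lebesgue) = ennreal \<tau> * c k" if "k \<in> {1..K}" for k
  proof -
    have "(\<integral>\<^sup>+ t \<in> I_k \<tau> k. c (nat \<lceil>t / \<tau>\<rceil>) \<partial>lebesgue) = (\<integral>\<^sup>+ t. c k * indicator (I_k \<tau> k) t \<partial>lebesgue)"
      using mem_I_k_iff_ceiling[OF assms(1), of k] that
      by (intro nn_integral_cong) (auto simp: indicator_def)
    then show ?thesis
      using emeasure_I_k[OF assms(1)] by (simp add: nn_integral_cmult_indicator mult.commute)
  qed
  then have "(\<Sum>k = 1..K. \<integral>\<^sup>+ t \<in> I_k \<tau> k. c (nat \<lceil>t / \<tau>\<rceil>) \<partial>lebesgue) = (\<Sum>k = 1..K. ennreal \<tau> * c k)"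
    by (rule sum.cong[OF refl])
  moreover have "(\<lambda>t. c (nat \<lceil>t / \<tau>\<rceil>)) \<in> borel_measurable lebesgue"
    by measurable
  ultimately show ?thesis
    using nn_integral_interval_eq_sum_I_k[OF assms] by simp
qed

lemma nn_integral_xbar:
  assumes "0 < \<tau>" "\<tau> = T / real K" and g: "\<And>x. 0 \<le> g x"
  shows "(\<integral>\<^sup>+ t \<in> {0<..<T}. ennreal (g (xbar \<tau> xs t)) \<partial>lebesgue)
           = ennreal (\<Sum>k = 1..K. \<tau> * g (xs k))"
  using nn_integral_grid_step_function[OF assms(1,2), of "\<lambda>k. ennreal (g (xs k))"] assms(1) g
  by (simp add: xbar_def ennreal_mult[symmetric] sum_nonneg)

lemma Lp_norm_le_grid_step:
  assumes tau: "0 < \<tau>" "\<tau> = T / real K" and r: "0 < r"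
    and b: "\<And>k. 0 \<le> b k" and u: "\<And>t. t \<in> {0<..<T} \<Longrightarrow> norm (u t) \<le> b (nat \<lceil>t / \<tau>\<rceil>)"
  shows "Lp_norm r T u \<le> (\<Sum>k = 1..K. \<tau> * b k powr r) powr (1 / r)"
proof -
  have "Lp_int r T u \<le> (\<integral>\<^sup>+ t \<in> {0<..<T}. ennreal (b (nat \<lceil>t / \<tau>\<rceil>) powr r) \<partial>lebesgue)"
    unfolding Lp_int_def using u r
    by (intro nn_integral_mono) (auto intro!: ennreal_leI powr_mono2 split: split_indicator)
  also have "\<dots> = ennreal (\<Sum>k = 1..K. \<tau> * b k powr r)"
    using nn_integral_grid_step_function[OF tau, of "\<lambda>k. ennreal (b k powr r)"] tau(1)
    by (subst sum_ennreal[symmetric]) (simp_all add: ennreal_mult)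
  finally have "enn2real (Lp_int r T u) \<le> (\<Sum>k = 1..K. \<tau> * b k powr r)"
    using tau(1) by (intro enn2real_leI) (simp add: sum_nonneg)
  then show ?thesis
    unfolding Lp_norm_def using r by (intro powr_mono2) auto
qed

lemma xhat_on_grid:
  fixes xs :: "nat \<Rightarrow> 'x::real_normed_vector"
  assumes "0 < \<tau>" "\<tau> = T / real K" "t \<in> {0<..<T}"
  obtains k \<mu> where "k = nat \<lceil>t / \<tau>\<rceil>" "k \<in> {1..K}" "0 \<le> \<mu>" "\<mu> \<le> 1"
    and "xbar \<tau> xs t = xs k" and "xhat \<tau> xs t = (1 - \<mu>) *\<^sub>R xs k + \<mu> *\<^sub>R xs (k - 1)"
proof (rule that)
  show "0 \<le> real (nat \<lceil>t / \<tau>\<rceil>) - t / \<tau>" "real (nat \<lceil>t / \<tau>\<rceil>) - t / \<tau> \<le> 1"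
    using ceiling_grid_index(1,2)[OF assms] by auto
  show "xhat \<tau> xs t = (1 - (real (nat \<lceil>t / \<tau>\<rceil>) - t / \<tau>)) *\<^sub>R xs (nat \<lceil>t / \<tau>\<rceil>)
      + (real (nat \<lceil>t / \<tau>\<rceil>) - t / \<tau>) *\<^sub>R xs (nat \<lceil>t / \<tau>\<rceil> - 1)"
    unfolding xhat_def Let_def by (simp add: algebra_simps)
qed (use ceiling_grid_index(3)[OF assms] in \<open>simp_all add: xbar_def\<close>)

lemma en_norm_bounds:
  assumes "linear j" "0 \<in> W"
    and bound: "\<And>w. w \<in> W \<Longrightarrow> norm w \<le> 1 \<Longrightarrow> \<bar>inner (j v) (j w)\<bar> \<le> B"
  shows "0 \<le> en_norm j W v" "en_norm j W v \<le> B"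
proof -
  let ?S = "{\<bar>inner (j v) (j w)\<bar> | w. w \<in> W \<and> norm w \<le> 1}"
  have "0 \<in> ?S"
    using assms(1,2) by (force simp: linear_0)
  moreover have "bdd_above ?S"
    by (rule bdd_aboveI[where M=B]) (use bound in blast)
  ultimately have "0 \<le> Sup ?S"
    by (rule cSup_upper)
  moreover have "Sup ?S \<le> B"
    using \<open>0 \<in> ?S\<close> by (intro cSup_least) (use bound in auto)
  ultimately show "0 \<le> en_norm j W v" "en_norm j W v \<le> B"
    unfolding en_norm_def by simp_all
qed

section \<open>A priori estimates for the Rothe-Galerkin scheme\<close>

locale rothe_galerkin_bounds =
  fixes j :: "'x::real_normed_vector \<Rightarrow> 'y::real_inner"
    and Vn :: "nat \<Rightarrow> 'x set"
    and T p q c0 c1 c2 lam \<gamma> Kj :: real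
    and x0 :: 'y and x0n :: "nat \<Rightarrow> 'x"
    and f :: "real \<Rightarrow> ('x \<Rightarrow>\<^sub>L real)" and F :: "real \<Rightarrow> real"
    and A :: "real \<Rightarrow> 'x \<Rightarrow> ('x \<Rightarrow>\<^sub>L real)"
  assumes T: "0 < T"
    and pq: "1 < p" "p \<le> q"
    and j_linear: "linear j" and j_bound: "0 < Kj" "\<And>x. norm (j x) \<le> Kj * norm x"
    and Vn_subspace: "\<And>n. subspace (Vn n)"
    and x0n_bound: "\<And>n. norm (j (x0n n)) \<le> norm x0"
    and F: "F \<in> borel_measurable lebesgue" "\<And>t. 0 \<le> F t"
      "AE t in lebesgue. t \<in> {0<..<T} \<longrightarrow> norm (f t) = F t"
    and F_integrable: "(\<integral>\<^sup>+ t \<in> {0<..<T}. ennreal (F t powr (p / (p - 1))) \<partial>lebesgue) < \<infinity>"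
    and A_measurable: "\<And>x. bochner_measurable T (\<lambda>t. A t x)"
    and constants: "0 < c0" "0 \<le> c1" "0 \<le> c2" "0 \<le> \<gamma>" "0 \<le> lam"
    and A_coercive: "AE t in lebesgue. t \<in> {0<..<T} \<longrightarrow>
      (\<forall>x. blinfun_apply (A t x) x \<ge> c0 * norm x powr p - c1 * (norm (j x))\<^sup>2 - c2)"
    and A_growth: "AE t in lebesgue. t \<in> {0<..<T} \<longrightarrow>
      (\<forall>x y. \<bar>blinfun_apply (A t x) y\<bar> \<le> lam * norm x powr p
         + \<gamma> * (1 + norm (j x) powr q + norm (j y) powr q + norm y powr p))"
begin

definition p_conj :: real where "p_conj = p / (p - 1)"

definition q_conj :: real where "q_conj = q / (q - 1)"

definition f_mass :: "real \<Rightarrow> nat \<Rightarrow> real" where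
  "f_mass \<tau> k = enn2real (\<integral>\<^sup>+ t \<in> I_k \<tau> k. ennreal (F t powr p_conj) \<partial>lebesgue)"

definition f_mass_total :: real where
  "f_mass_total = enn2real (\<integral>\<^sup>+ t \<in> {0<..<T}. ennreal (F t powr p_conj) \<partial>lebesgue)"

definition growth :: "'x \<Rightarrow> real" where
  "growth x = lam * norm x powr p + \<gamma> * (1 + norm (j x) powr q)"

definition young_const :: real where
  "young_const = ((c0 / 2) powr (1 / p)) powr (- p_conj)"

definition source_total :: real where
  "source_total = 2 * c2 * T + 2 * young_const * f_mass_total"

definition energy_bound :: real where
  "energy_bound = exp (4 * c1 * T) * ((norm x0)\<^sup>2 + source_total)"

definition dissipation_bound :: real where
  "dissipation_bound = (energy_bound + 2 * c1 * T * energy_bound + source_total) / c0"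

definition growth_total :: real where
  "growth_total = lam * dissipation_bound + \<gamma> * T * (1 + sqrt energy_bound powr q)"

definition residual_const :: real where
  "residual_const = 2 + \<gamma> + \<gamma> * Kj powr q"

definition residual_weight :: "real \<Rightarrow> 'x \<Rightarrow> nat \<Rightarrow> real" where
  "residual_weight \<tau> x k = f_mass \<tau> k / \<tau> + growth x"

definition residual_bound :: real where
  "residual_bound = residual_const * (T + f_mass_total + growth_total) powr (1 / q_conj)"

lemma constants_nonneg:
  "0 \<le> young_const" "0 \<le> f_mass_total" "0 \<le> source_total" "0 \<le> energy_bound"
  "0 \<le> dissipation_bound" "0 \<le> growth_total" "0 \<le> residual_const" "0 \<le> residual_bound"
proof -
  show "0 \<le> young_const" "0 \<le> f_mass_total" "0 \<le> residual_const"
    unfolding young_const_def f_mass_total_def residual_const_def using constants by simp_all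
  then show "0 \<le> source_total"
    unfolding source_total_def using constants T by simp
  then show "0 \<le> energy_bound"
    unfolding energy_bound_def by simp
  then show "0 \<le> dissipation_bound"
    unfolding dissipation_bound_def using constants T \<open>0 \<le> source_total\<close> by simp
  then show "0 \<le> growth_total"
    unfolding growth_total_def using constants T by simp
  show "0 \<le> residual_bound"
    unfolding residual_bound_def using \<open>0 \<le> residual_const\<close> by simp
qed

lemma growth_nonneg: "0 \<le> growth x"
  unfolding growth_def using constants by simp

lemma A_growth_scaled:
  assumes "\<forall>x y. \<bar>blinfun_apply (A t x) y\<bar> \<le> lam * norm x powr p
             + \<gamma> * (1 + norm (j x) powr q + norm (j y) powr q + norm y powr p)"
    and "0 < s"
  shows "\<bar>blinfun_apply (A t x) y\<bar>
           \<le> growth x / s + \<gamma> * (s powr (p - 1) * norm y powr p + s powr (q - 1) * norm (j y) powr q)"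
proof (rule blinfun_abs_le_scaled[OF j_linear _ assms(2)])
  show "\<bar>blinfun_apply (A t x) y\<bar> \<le> growth x + \<gamma> * (norm y powr p + norm (j y) powr q)" for y
    using assms(1)[rule_format, of x y] by (simp add: growth_def algebra_simps)
qed

context
  fixes \<tau> :: real and K :: nat
  assumes tau: "0 < \<tau>" "\<tau> = T / real K"
begin

lemma K_mult_tau: "real K * \<tau> = T"
  using tau by (cases "K = 0") auto

lemma f_mass_I_k:
  assumes "k \<in> {1..K}"
  shows "(\<integral>\<^sup>+ t \<in> I_k \<tau> k. ennreal (F t powr p_conj) \<partial>lebesgue) = ennreal (f_mass \<tau> k)"
proof -
  have "(\<integral>\<^sup>+ t \<in> I_k \<tau> k. ennreal (F t powr p_conj) \<partial>lebesgue)
      \<le> (\<integral>\<^sup>+ t \<in> {0<..<T}. ennreal (F t powr p_conj) \<partial>lebesgue)"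
    by (intro nn_integral_mono_AE)
       (use AE_I_k_imp_interval[OF tau assms] in \<open>eventually_elim, simp split: split_indicator\<close>)
  also have "\<dots> < \<infinity>"
    using F_integrable unfolding p_conj_def .
  finally show ?thesis
    unfolding f_mass_def by (simp add: less_top)
qed

lemma sum_f_mass: "(\<Sum>k = 1..K. f_mass \<tau> k) = f_mass_total"
proof -
  have "(\<Sum>k = 1..K. ennreal (f_mass \<tau> k))
      = (\<integral>\<^sup>+ t \<in> {0<..<T}. ennreal (F t powr p_conj) \<partial>lebesgue)"
    using nn_integral_interval_eq_sum_I_k[OF tau, of "\<lambda>t. ennreal (F t powr p_conj)"] F(1)
    by (simp add: f_mass_I_k)
  moreover have "(\<Sum>k = 1..K. ennreal (f_mass \<tau> k)) = ennreal (\<Sum>k = 1..K. f_mass \<tau> k)"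
    by (intro sum_ennreal) (simp add: f_mass_def)
  ultimately show ?thesis
    unfolding f_mass_total_def by (metis enn2real_ennreal sum_nonneg enn2real_nonneg f_mass_def)
qed

lemma avg_A_self_ge:
  assumes k: "k \<in> {1..K}"
  shows "c0 * norm x powr p - c1 * (norm (j x))\<^sup>2 - c2 \<le> avg_A \<tau> k A x x"
proof -
  obtain a where a: "a \<in> borel_measurable lebesgue"
    "AE t in lebesgue. t \<in> {0<..<T} \<longrightarrow> blinfun_apply (A t x) x = a t"
    using bochner_measurable_comp_AE_eq_measurable[OF A_measurable[of x], of "\<lambda>\<Phi>. blinfun_apply \<Phi> x"]
    by (metis blinfun.bounded_linear_left linear_continuous_on)
  have in_I: "AE t in lebesgue. t \<in> I_k \<tau> k \<longrightarrow> t \<in> {0<..<T}"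
    by (rule AE_I_k_imp_interval[OF tau k])
  have "(c0 * norm x powr p - c1 * (norm (j x))\<^sup>2 - c2) * \<tau>
      \<le> (LINT t : I_k \<tau> k | lebesgue. blinfun_apply (A t x) x)"
  proof (rule set_integral_ge_const_mult_measure[OF I_k_measurable emeasure_I_k[OF tau(1)] _ a(1)])
    show "AE t in lebesgue. t \<in> I_k \<tau> k \<longrightarrow> blinfun_apply (A t x) x = a t"
      using in_I a(2) by eventually_elim blast
    show "AE t in lebesgue. t \<in> I_k \<tau> k \<longrightarrow> \<bar>blinfun_apply (A t x) x\<bar>
        \<le> lam * norm x powr p + \<gamma> * (1 + norm (j x) powr q + norm (j x) powr q + norm x powr p)"
      using in_I A_growth by eventually_elim blast
    show "AE t in lebesgue. t \<in> I_k \<tau> k \<longrightarrow>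
        c0 * norm x powr p - c1 * (norm (j x))\<^sup>2 - c2 \<le> blinfun_apply (A t x) x"
      using in_I A_coercive by eventually_elim blast
  qed (use tau in simp)
  then show ?thesis
    unfolding avg_A_def using tau(1) by (simp add: field_simps)
qed

lemma avg_A_abs_le:
  assumes k: "k \<in> {1..K}" and s: "0 < s"
  shows "\<bar>avg_A \<tau> k A x w\<bar>
           \<le> growth x / s + \<gamma> * (s powr (p - 1) * norm w powr p + s powr (q - 1) * norm (j w) powr q)"
    (is "_ \<le> ?B")
proof -
  have "0 \<le> ?B"
    using growth_nonneg s constants by simp
  moreover have "AE t in lebesgue. t \<in> I_k \<tau> k \<longrightarrow> \<bar>blinfun_apply (A t x) w\<bar> \<le> ?B"
    using AE_I_k_imp_interval[OF tau k] A_growth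
    by eventually_elim (auto simp: A_growth_scaled[OF _ s])
  ultimately have "\<bar>LINT t : I_k \<tau> k | lebesgue. blinfun_apply (A t x) w\<bar> \<le> ?B * \<tau>"
    using tau(1) by (intro abs_set_integral_le_const[OF I_k_measurable emeasure_I_k]) auto
  then show ?thesis
    unfolding avg_A_def using tau(1) by (simp add: abs_mult field_simps)
qed

lemma avg_f_abs_le:
  assumes k: "k \<in> {1..K}" and e: "0 < e"
  shows "\<bar>avg_f \<tau> k f x\<bar> \<le> e powr p * norm x powr p + e powr (- p_conj) * (f_mass \<tau> k / \<tau>)"
proof -
  have "\<bar>LINT t : I_k \<tau> k | lebesgue. blinfun_apply (f t) x\<bar>
      \<le> (e powr p * norm x powr p) * \<tau> + e powr (- p_conj) * f_mass \<tau> k"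
  proof (rule abs_set_integral_le_affine_bound[OF I_k_measurable _ emeasure_I_k[OF tau(1)]
        _ _ f_mass_I_k[OF k]])
    show "(\<lambda>t. F t powr p_conj) \<in> borel_measurable lebesgue"
      using F(1) by measurable
    show "AE t in lebesgue. t \<in> I_k \<tau> k \<longrightarrow>
        \<bar>blinfun_apply (f t) x\<bar> \<le> e powr p * norm x powr p + e powr (- p_conj) * F t powr p_conj"
      using AE_I_k_imp_interval[OF tau k] F(3)
    proof eventually_elim
      case (elim t)
      show ?case
      proof
        assume "t \<in> I_k \<tau> k"
        then have "\<bar>blinfun_apply (f t) x\<bar> \<le> norm x * F t"
          using elim norm_blinfun[of "f t" x] by (simp add: mult.commute)
        also have "\<dots> \<le> e powr p * norm x powr p + e powr (- p_conj) * F t powr p_conj"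
          unfolding p_conj_def using F(2) pq(1) e by (intro young_le_powr_add_weighted) auto
        finally show "\<bar>blinfun_apply (f t) x\<bar> \<le> e powr p * norm x powr p + e powr (- p_conj) * F t powr p_conj" .
      qed
    qed
  qed (use tau F(2) in \<open>auto simp: f_mass_def\<close>)
  then show ?thesis
    unfolding avg_f_def using tau(1) by (simp add: abs_mult field_simps)
qed

lemma avg_f_unit_abs_le:
  assumes k: "k \<in> {1..K}" and w: "norm w \<le> 1" and s: "0 < s"
  shows "\<bar>avg_f \<tau> k f w\<bar> \<le> s powr (p - 1) + (f_mass \<tau> k / \<tau>) / s"
proof -
  define e where "e = s powr (1 / p_conj)"
  have e: "0 < e" "e powr p = s powr (p - 1)" "e powr (- p_conj) = 1 / s"
    unfolding e_def p_conj_def using pq(1) s by (simp_all add: powr_powr powr_minus_divide)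
  have "norm w powr p \<le> 1"
    using powr_mono2[of p "norm w" 1] w pq by simp
  then have "s powr (p - 1) * norm w powr p \<le> s powr (p - 1)"
    by (simp add: mult_left_le)
  then show ?thesis
    using avg_f_abs_le[OF k e(1), of w] unfolding e(2,3) by (simp add: mult.commute)
qed

lemma avg_A_unit_abs_le:
  assumes k: "k \<in> {1..K}" and w: "norm w \<le> 1" and s: "0 < s"
  shows "\<bar>avg_A \<tau> k A x w\<bar> \<le> growth x / s + \<gamma> * (s powr (p - 1) + s powr (q - 1) * Kj powr q)"
proof -
  have "norm w powr p \<le> 1"
    using powr_mono2[of p "norm w" 1] w pq by simp
  moreover have "norm (j w) \<le> Kj"
    using j_bound w by (metis mult_left_le norm_ge_zero order_trans less_imp_le)
  then have "norm (j w) powr q \<le> Kj powr q"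
    using pq by (intro powr_mono2) auto
  ultimately have "s powr (p - 1) * norm w powr p \<le> s powr (p - 1)"
    and "s powr (q - 1) * norm (j w) powr q \<le> s powr (q - 1) * Kj powr q"
    by (simp_all add: mult_left_le mult_left_mono)
  then have "\<gamma> * (s powr (p - 1) * norm w powr p + s powr (q - 1) * norm (j w) powr q)
      \<le> \<gamma> * (s powr (p - 1) + s powr (q - 1) * Kj powr q)"
    using constants(4) by (metis add_mono mult_left_mono)
  then show ?thesis
    using avg_A_abs_le[OF k s, of x w] by simp
qed

lemma residual_abs_le:
  assumes k: "k \<in> {1..K}" and w: "norm w \<le> 1"
  shows "\<bar>avg_f \<tau> k f w - avg_A \<tau> k A x w\<bar>
           \<le> residual_const * (1 + residual_weight \<tau> x k) powr (1 - 1 / q)"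
proof -
  define \<beta> where "\<beta> = 1 + residual_weight \<tau> x k"
  have \<beta>: "1 \<le> \<beta>"
    unfolding \<beta>_def residual_weight_def using growth_nonneg tau(1) by (simp add: f_mass_def)
  txt \<open>With \<open>s = \<beta>\<^sup>1\<^sup>/\<^sup>q\<close> each term of the bound is at most \<open>\<beta> / s\<close>.\<close>
  define s where "s = \<beta> powr (1 / q)"
  have s: "1 \<le> s" "s powr q = \<beta>"
    unfolding s_def using \<beta> pq by (auto simp: powr_powr ge_one_powr_ge_zero)
  have s_p: "s powr p \<le> \<beta>"
    using powr_mono[OF pq(2) s(1)] s(2) by simp
  have "0 < s"
    using s(1) by simp
  have "s powr (p - 1) + (f_mass \<tau> k / \<tau>) / s + (growth x / s + \<gamma> * (s powr (p - 1) + s powr (q - 1) * Kj powr q))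
      = (residual_weight \<tau> x k + (1 + \<gamma>) * s powr p + \<gamma> * Kj powr q * s powr q) / s"
    unfolding residual_weight_def using s(1) by (simp add: powr_diff field_simps)
  then have "\<bar>avg_f \<tau> k f w - avg_A \<tau> k A x w\<bar>
      \<le> (residual_weight \<tau> x k + (1 + \<gamma>) * s powr p + \<gamma> * Kj powr q * s powr q) / s"
    using avg_f_unit_abs_le[OF k w \<open>0 < s\<close>] avg_A_unit_abs_le[OF k w \<open>0 < s\<close>, of x]
      abs_triangle_ineq4[of "avg_f \<tau> k f w" "avg_A \<tau> k A x w"]
    by linarith
  also have "\<dots> \<le> (\<beta> + (1 + \<gamma>) * \<beta> + \<gamma> * Kj powr q * \<beta>) / s"
    using s s_p constants unfolding \<beta>_def by (intro divide_right_mono add_mono mult_left_mono) auto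
  also have "\<dots> = residual_const * (\<beta> / s)"
    unfolding residual_const_def by (simp add: field_simps)
  also have "\<beta> / s = \<beta> powr (1 - 1 / q)"
    unfolding s_def using \<beta> by (simp add: powr_diff)
  finally show ?thesis
    unfolding \<beta>_def .
qed

lemma sum_source: "(\<Sum>k = 1..K. 2 * c2 * \<tau> + 2 * young_const * f_mass \<tau> k) = source_total"
proof -
  have "(\<Sum>k = 1..K. 2 * c2 * \<tau> + 2 * young_const * f_mass \<tau> k)
      = 2 * c2 * (real K * \<tau>) + 2 * young_const * (\<Sum>k = 1..K. f_mass \<tau> k)"
    by (simp add: sum.distrib sum_distrib_left)
  then show ?thesis
    unfolding source_total_def sum_f_mass K_mult_tau .
qed

lemma pairing_le_scaled:
  assumes y: "y \<in> LpLq p q T j" and s: "0 < s"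
  shows "\<bar>LINT t : {0<..<T} | lebesgue. blinfun_apply (A t (xbar \<tau> xs t)) (y t)\<bar>
           \<le> (\<Sum>k = 1..K. \<tau> * growth (xs k)) / s
             + \<gamma> * (s powr (p - 1) * Lp_norm p T y powr p
                    + s powr (q - 1) * Lp_norm q T (\<lambda>t. j (y t)) powr q)"
    (is "_ \<le> ?C / s + \<gamma> * ?D")
proof (rule abs_set_integral_le_nn_integral)
  obtain Y1 where Y1: "Y1 \<in> borel_measurable lebesgue" "\<And>t. 0 \<le> Y1 t"
    "AE t in lebesgue. t \<in> {0<..<T} \<longrightarrow> norm (y t) = Y1 t"
    "(\<integral>\<^sup>+ t \<in> {0<..<T}. ennreal (Y1 t powr p) \<partial>lebesgue) = ennreal (Lp_norm p T y powr p)"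
    using Lp_norm_representative[of y p T] y pq unfolding LpLq_def by auto
  obtain Y2 where Y2: "Y2 \<in> borel_measurable lebesgue" "\<And>t. 0 \<le> Y2 t"
    "AE t in lebesgue. t \<in> {0<..<T} \<longrightarrow> norm (j (y t)) = Y2 t"
    "(\<integral>\<^sup>+ t \<in> {0<..<T}. ennreal (Y2 t powr q) \<partial>lebesgue) = ennreal (Lp_norm q T (\<lambda>t. j (y t)) powr q)"
    using Lp_norm_representative[of "\<lambda>t. j (y t)" q T] y pq unfolding LpLq_def by auto
  define G where "G t = s powr (p - 1) * Y1 t powr p + s powr (q - 1) * Y2 t powr q" for t
  have C: "0 \<le> ?C"
    using tau(1) growth_nonneg by (simp add: sum_nonneg)
  have growth_int: "(\<integral>\<^sup>+ t \<in> {0<..<T}. ennreal (growth (xbar \<tau> xs t)) \<partial>lebesgue) = ennreal ?C"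
    by (rule nn_integral_xbar[OF tau growth_nonneg])
  have G_int: "(\<integral>\<^sup>+ t \<in> {0<..<T}. ennreal (G t) \<partial>lebesgue) = ennreal ?D"
    unfolding G_def by (rule set_nn_integral_add_scaled[OF _ _ _ _ _ Y1(4) Y2(4)]) (use Y1 Y2 in auto)
  have "(\<integral>\<^sup>+ t \<in> {0<..<T}. ennreal \<bar>blinfun_apply (A t (xbar \<tau> xs t)) (y t)\<bar> \<partial>lebesgue)
      \<le> (\<integral>\<^sup>+ t \<in> {0<..<T}. ennreal (1 / s * growth (xbar \<tau> xs t) + \<gamma> * G t) \<partial>lebesgue)"
  proof (intro nn_integral_mono_AE)
    show "AE t in lebesgue. ennreal \<bar>blinfun_apply (A t (xbar \<tau> xs t)) (y t)\<bar> * indicator {0<..<T} t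
        \<le> ennreal (1 / s * growth (xbar \<tau> xs t) + \<gamma> * G t) * indicator {0<..<T} t"
      using A_growth Y1(3) Y2(3)
    proof eventually_elim
      case (elim t)
      show ?case
      proof (cases "t \<in> {0<..<T}")
        case True
        then have "\<bar>blinfun_apply (A t (xbar \<tau> xs t)) (y t)\<bar> \<le> 1 / s * growth (xbar \<tau> xs t) + \<gamma> * G t"
          using A_growth_scaled[OF _ s, of t "xbar \<tau> xs t" "y t"] elim by (simp add: G_def)
        then show ?thesis
          using True by (simp add: ennreal_leI)
      qed simp
    qed
  qed
  also have "\<dots> = ennreal (1 / s * ?C + \<gamma> * ?D)"
  proof (rule set_nn_integral_add_scaled[OF _ _ _ growth_nonneg _ growth_int G_int])
    show "(\<lambda>t. growth (xbar \<tau> xs t)) \<in> borel_measurable lebesgue"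
      unfolding xbar_def by measurable
    show "G \<in> borel_measurable lebesgue"
      unfolding G_def using Y1(1) Y2(1) by measurable
  qed (use s C Y1(2) Y2(2) constants in \<open>auto simp: G_def\<close>)
  finally show "(\<integral>\<^sup>+ t \<in> {0<..<T}. ennreal \<bar>blinfun_apply (A t (xbar \<tau> xs t)) (y t)\<bar> \<partial>lebesgue)
      \<le> ennreal (?C / s + \<gamma> * ?D)"
    by simp
  show "0 \<le> ?C / s + \<gamma> * ?D"
    using s C constants by simp
qed

context
  fixes n :: nat and xs :: "nat \<Rightarrow> 'x"
  assumes small: "4 * c1 * \<tau> < 1" and rg: "RG_solution j A f (Vn n) \<tau> K (x0n n) xs"
begin

lemma RG_step:
  assumes "k \<in> {1..K}" "v \<in> Vn n"
  shows "inner ((1 / \<tau>) *\<^sub>R (j (xs k) - j (xs (k - 1)))) (j v) + avg_A \<tau> k A (xs k) v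
           = avg_f \<tau> k f v"
  using rg assms unfolding RG_solution_def by blast

lemma energy_step:
  assumes k: "k \<in> {1..K}"
  shows "(norm (j (xs k)))\<^sup>2 * (1 - 2 * c1 * \<tau>) + c0 * \<tau> * norm (xs k) powr p
           \<le> (norm (j (xs (k - 1))))\<^sup>2 + (2 * c2 * \<tau> + 2 * young_const * f_mass \<tau> k)"
proof -
  define u w where "u = j (xs k)" and "w = j (xs (k - 1))"
  define P where "P = norm (xs k) powr p"
  define e where "e = (c0 / 2) powr (1 / p)"
  have e: "0 < e" "e powr p = c0 / 2" "e powr (- p_conj) = young_const"
    unfolding e_def young_const_def using constants(1) pq(1) by (simp_all add: powr_powr)
  have "xs k \<in> Vn n"
    using rg k unfolding RG_solution_def by auto
  then have "(1 / \<tau>) * inner (u - w) u + avg_A \<tau> k A (xs k) (xs k) = avg_f \<tau> k f (xs k)"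
    using RG_step[OF k] unfolding u_def w_def by simp
  then have "inner (u - w) u = \<tau> * avg_f \<tau> k f (xs k) - \<tau> * avg_A \<tau> k A (xs k) (xs k)"
    using tau(1) by (simp add: field_simps)
  moreover have "\<tau> * avg_f \<tau> k f (xs k) \<le> \<tau> * (c0 / 2 * P) + young_const * f_mass \<tau> k"
  proof -
    have "avg_f \<tau> k f (xs k) \<le> c0 / 2 * P + young_const * (f_mass \<tau> k / \<tau>)"
      using avg_f_abs_le[OF k e(1), of "xs k"] unfolding e(2,3) P_def by simp
    then show ?thesis
      using tau(1) by (simp add: field_simps)
  qed
  moreover have "\<tau> * (c0 * P - c1 * (norm u)\<^sup>2 - c2) \<le> \<tau> * avg_A \<tau> k A (xs k) (xs k)"
    using avg_A_self_ge[OF k, of "xs k"] tau(1) unfolding P_def u_def by simp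
  ultimately have "((norm u)\<^sup>2 - (norm w)\<^sup>2) / 2
      \<le> \<tau> * (c0 / 2 * P) + young_const * f_mass \<tau> k - \<tau> * (c0 * P - c1 * (norm u)\<^sup>2 - c2)"
    using inner_diff_self_ge[of u w] by linarith
  then show ?thesis
    unfolding u_def w_def P_def by (simp add: field_simps)
qed

lemma energy_recursion:
  assumes k: "k \<in> {1..K}"
  shows "(norm (j (xs k)))\<^sup>2
           \<le> (1 + 4 * c1 * \<tau>) * ((norm (j (xs (k - 1))))\<^sup>2 + (2 * c2 * \<tau> + 2 * young_const * f_mass \<tau> k))"
proof -
  define a where "a = 2 * c1 * \<tau>"
  define E where "E = (norm (j (xs k)))\<^sup>2"
  have a: "0 \<le> a" "a \<le> 1 / 2"
    unfolding a_def using constants tau(1) small by simp_all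
  have "0 \<le> c0 * \<tau> * norm (xs k) powr p"
    using constants(1) tau(1) by simp
  then have step: "E * (1 - a) \<le> (norm (j (xs (k - 1))))\<^sup>2 + (2 * c2 * \<tau> + 2 * young_const * f_mass \<tau> k)"
    using energy_step[OF k] unfolding a_def E_def by linarith
  txt \<open>This is where \<open>4 c\<^sub>1 \<tau> < 1\<close>, i.e. \<open>a \<le> 1/2\<close>, is used.\<close>
  have "1 \<le> (1 + 2 * a) * (1 - a)"
    using a mult_left_mono[of "a * 2" 1 a] by (simp add: algebra_simps)
  then have "E \<le> E * ((1 + 2 * a) * (1 - a))"
    using mult_left_mono[of 1 _ E] unfolding E_def by simp
  also have "\<dots> = (1 + 2 * a) * (E * (1 - a))"
    by (simp add: algebra_simps)
  also have "\<dots> \<le> (1 + 2 * a) * ((norm (j (xs (k - 1))))\<^sup>2 + (2 * c2 * \<tau> + 2 * young_const * f_mass \<tau> k))"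
    using step a by (intro mult_left_mono) auto
  finally show ?thesis
    unfolding a_def E_def by (simp add: algebra_simps)
qed

lemma energy_estimate:
  assumes "k \<le> K"
  shows "(norm (j (xs k)))\<^sup>2 \<le> energy_bound"
proof -
  define g where "g i = 2 * c2 * \<tau> + 2 * young_const * f_mass \<tau> i" for i
  define b where "b = 1 + 4 * c1 * \<tau>"
  have g: "0 \<le> g i" for i
    unfolding g_def using constants tau(1) constants_nonneg(1) by (simp add: f_mass_def)
  have b: "1 \<le> b"
    unfolding b_def using constants(2) tau(1) by simp
  have step: "(norm (j (xs i)))\<^sup>2 \<le> b * ((norm (j (xs (i - 1))))\<^sup>2 + g i)" if "1 \<le> i" "i \<le> K" for i
    using energy_recursion[of i] that unfolding b_def g_def by simp
  have "b ^ k \<le> exp (4 * c1 * \<tau>) ^ k"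
    unfolding b_def using constants(2) tau(1) exp_ge_add_one_self[of "4 * c1 * \<tau>"]
    by (intro power_mono) (simp_all add: add.commute)
  also have "\<dots> = exp (4 * c1 * (real k * \<tau>))"
    by (simp add: exp_of_nat_mult[symmetric] ac_simps)
  also have "\<dots> \<le> exp (4 * c1 * T)"
  proof -
    have "real k * \<tau> \<le> real K * \<tau>"
      using assms tau(1) by (intro mult_right_mono) auto
    then show ?thesis
      using constants(2) K_mult_tau by (simp add: mult_left_mono)
  qed
  finally have bk: "b ^ k \<le> exp (4 * c1 * T)" .
  have "(\<Sum>i = 1..k. g i) \<le> (\<Sum>i = 1..K. g i)"
    using assms g by (intro sum_mono2) auto
  then have sums: "(\<Sum>i = 1..k. g i) \<le> source_total"
    using sum_source unfolding g_def by simp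
  have "(norm (j (xs 0)))\<^sup>2 \<le> (norm x0)\<^sup>2"
    using rg x0n_bound[of n] unfolding RG_solution_def by (simp add: power_mono)
  from add_mono[OF this sums] have "b ^ k * ((norm (j (xs 0)))\<^sup>2 + (\<Sum>i = 1..k. g i)) \<le> energy_bound"
    unfolding energy_bound_def using bk g by (intro mult_mono) (auto intro!: add_nonneg_nonneg sum_nonneg)
  then show ?thesis
    using discrete_gronwall[where e="\<lambda>i. (norm (j (xs i)))\<^sup>2", OF b g step assms] by linarith
qed

lemma dissipation_estimate: "(\<Sum>k = 1..K. \<tau> * norm (xs k) powr p) \<le> dissipation_bound"
proof -
  define e where "e k = (norm (j (xs k)))\<^sup>2" for k
  define g where "g k = 2 * c2 * \<tau> + 2 * young_const * f_mass \<tau> k" for k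
  have "c0 * (\<tau> * norm (xs k) powr p) \<le> (e (k - 1) - e k) + (2 * c1 * \<tau> * energy_bound + g k)"
    if k: "k \<in> {1..K}" for k
  proof -
    have "e k * (2 * c1 * \<tau>) \<le> energy_bound * (2 * c1 * \<tau>)"
      using energy_estimate[of k] k constants(2) tau(1) unfolding e_def by (intro mult_right_mono) auto
    then show ?thesis
      using energy_step[OF k] unfolding e_def g_def by (simp add: algebra_simps)
  qed
  then have "(\<Sum>k = 1..K. c0 * (\<tau> * norm (xs k) powr p))
      \<le> (\<Sum>k = 1..K. (e (k - 1) - e k) + (2 * c1 * \<tau> * energy_bound + g k))"
    by (rule sum_mono)
  also have "\<dots> = (\<Sum>k = 1..K. e (k - 1) - e k) + real K * (2 * c1 * \<tau> * energy_bound) + source_total"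
    using sum_source unfolding g_def[symmetric] by (simp add: sum.distrib)
  also have "(\<Sum>k = 1..K. e (k - 1) - e k) = e 0 - e K"
    using sum_telescope''[of 0 K e] sum_negf[of "\<lambda>k. e k - e (k - 1)" "{1..K}"] by simp
  also have "e 0 - e K + real K * (2 * c1 * \<tau> * energy_bound) + source_total
      \<le> energy_bound + 2 * c1 * T * energy_bound + source_total"
  proof -
    have "real K * (2 * c1 * \<tau> * energy_bound) = 2 * c1 * T * energy_bound"
      using K_mult_tau by (simp add: algebra_simps)
    moreover have "e 0 \<le> energy_bound" "0 \<le> e K"
      using energy_estimate[of 0] unfolding e_def by simp_all
    ultimately show ?thesis
      by linarith
  qed
  finally show ?thesis
    unfolding dissipation_bound_def using constants(1)
    by (simp add: pos_le_divide_eq mult.commute sum_distrib_left)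
qed

lemma j_iterate_le: "k \<le> K \<Longrightarrow> norm (j (xs k)) \<le> sqrt energy_bound"
  using energy_estimate by (simp add: real_le_rsqrt)

lemma sum_growth_le: "(\<Sum>k = 1..K. \<tau> * growth (xs k)) \<le> growth_total"
proof -
  have "(\<Sum>k = 1..K. \<tau> * growth (xs k))
      = lam * (\<Sum>k = 1..K. \<tau> * norm (xs k) powr p) + \<gamma> * (\<Sum>k = 1..K. \<tau> * (1 + norm (j (xs k)) powr q))"
    unfolding growth_def by (simp add: sum.distrib sum_distrib_left algebra_simps)
  also have "\<dots> \<le> lam * dissipation_bound + \<gamma> * (\<Sum>k = 1..K. \<tau> * (1 + sqrt energy_bound powr q))"
  proof -
    have "\<tau> * (1 + norm (j (xs k)) powr q) \<le> \<tau> * (1 + sqrt energy_bound powr q)" if "k \<in> {1..K}" for k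
      using that j_iterate_le[of k] pq tau(1) by (intro mult_left_mono add_left_mono powr_mono2) auto
    then have "(\<Sum>k = 1..K. \<tau> * (1 + norm (j (xs k)) powr q)) \<le> (\<Sum>k = 1..K. \<tau> * (1 + sqrt energy_bound powr q))"
      by (rule sum_mono)
    then show ?thesis
      using dissipation_estimate constants by (intro add_mono mult_left_mono) auto
  qed
  also have "\<dots> = growth_total"
    using K_mult_tau unfolding growth_total_def by (simp add: algebra_simps)
  finally show ?thesis .
qed

lemma xbar_Lp_norm_le: "Lp_norm p T (xbar \<tau> xs) \<le> dissipation_bound powr (1 / p)"
proof -
  have "0 \<le> (\<Sum>k = 1..K. \<tau> * norm (xs k) powr p)"
    using tau(1) by (simp add: sum_nonneg)
  moreover have "Lp_int p T (xbar \<tau> xs) = ennreal (\<Sum>k = 1..K. \<tau> * norm (xs k) powr p)"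
    unfolding Lp_int_def using nn_integral_xbar[OF tau, of "\<lambda>x. norm x powr p" xs] by simp
  ultimately show ?thesis
    unfolding Lp_norm_def using dissipation_estimate pq by (simp add: powr_mono2)
qed

lemma j_xbar_Linf_le: "Linf_norm T (\<lambda>t. j (xbar \<tau> xs t)) \<le> sqrt energy_bound"
proof (intro Linf_norm_le AE_I2 impI)
  fix t
  assume "t \<in> {0<..<T}"
  then have "nat \<lceil>t / \<tau>\<rceil> \<le> K"
    using ceiling_grid_index(3)[OF tau] by simp
  then show "norm (j (xbar \<tau> xs t)) \<le> sqrt energy_bound"
    unfolding xbar_def by (rule j_iterate_le)
qed (simp add: constants_nonneg)

lemma j_xhat_Linf_le: "Linf_norm T (\<lambda>t. j (xhat \<tau> xs t)) \<le> sqrt energy_bound"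
proof (intro Linf_norm_le AE_I2 impI)
  fix t
  assume "t \<in> {0<..<T}"
  then obtain k \<mu> where k: "k \<in> {1..K}" and \<mu>: "0 \<le> \<mu>" "\<mu> \<le> 1"
    and xhat: "xhat \<tau> xs t = (1 - \<mu>) *\<^sub>R xs k + \<mu> *\<^sub>R xs (k - 1)"
    by (rule xhat_on_grid[OF tau])
  have "norm (j (xhat \<tau> xs t)) \<le> norm ((1 - \<mu>) *\<^sub>R j (xs k)) + norm (\<mu> *\<^sub>R j (xs (k - 1)))"
    unfolding xhat linear_add[OF j_linear] linear_scale[OF j_linear] by (rule norm_triangle_ineq)
  also have "\<dots> = (1 - \<mu>) * norm (j (xs k)) + \<mu> * norm (j (xs (k - 1)))"
    using \<mu> by simp
  also have "\<dots> \<le> (1 - \<mu>) * sqrt energy_bound + \<mu> * sqrt energy_bound"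
    using k \<mu> j_iterate_le[of k] j_iterate_le[of "k - 1"] by (intro add_mono mult_left_mono) auto
  finally show "norm (j (xhat \<tau> xs t)) \<le> sqrt energy_bound"
    by (simp add: algebra_simps)
qed (simp add: constants_nonneg)

lemma pairing_le:
  assumes y: "y \<in> LpLq p q T j"
  shows "\<bar>LINT t : {0<..<T} | lebesgue. blinfun_apply (A t (xbar \<tau> xs t)) (y t)\<bar>
           \<le> (growth_total + 2 * \<gamma>) * LpLq_norm p q T j y"
proof -
  have "\<bar>LINT t : {0<..<T} | lebesgue. blinfun_apply (A t (xbar \<tau> xs t)) (y t)\<bar>
      \<le> ((\<Sum>k = 1..K. \<tau> * growth (xs k)) + 2 * \<gamma>) * (Lp_norm p T y + Lp_norm q T (\<lambda>t. j (y t)))"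
    by (rule le_of_scaled_bounds[OF pairing_le_scaled[OF y]])
       (use tau(1) growth_nonneg constants pq in \<open>auto simp: Lp_norm_def sum_nonneg\<close>)
  also have "\<dots> \<le> (growth_total + 2 * \<gamma>) * LpLq_norm p q T j y"
    unfolding LpLq_norm_def using sum_growth_le by (intro mult_right_mono) (auto simp: Lp_norm_def)
  finally show ?thesis .
qed

lemma en_norm_increment_le:
  assumes t: "t \<in> {0<..<T}"
  shows "0 \<le> en_norm j (Vn n) (xhat \<tau> xs t - xbar \<tau> xs t)"
    and "en_norm j (Vn n) (xhat \<tau> xs t - xbar \<tau> xs t)
           \<le> \<tau> * (residual_const * (1 + residual_weight \<tau> (xs (nat \<lceil>t / \<tau>\<rceil>)) (nat \<lceil>t / \<tau>\<rceil>)) powr (1 - 1 / q))"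
proof -
  obtain k \<mu> where k: "k = nat \<lceil>t / \<tau>\<rceil>" "k \<in> {1..K}" and \<mu>: "0 \<le> \<mu>" "\<mu> \<le> 1"
    and xbar: "xbar \<tau> xs t = xs k" and xhat: "xhat \<tau> xs t = (1 - \<mu>) *\<^sub>R xs k + \<mu> *\<^sub>R xs (k - 1)"
    by (rule xhat_on_grid[OF tau t])
  have "\<bar>inner (j (xhat \<tau> xs t - xbar \<tau> xs t)) (j w)\<bar>
      \<le> \<tau> * (residual_const * (1 + residual_weight \<tau> (xs k) k) powr (1 - 1 / q))"
    if w: "w \<in> Vn n" "norm w \<le> 1" for w
  proof -
    have jd: "j (xhat \<tau> xs t - xbar \<tau> xs t) = \<mu> *\<^sub>R (j (xs (k - 1)) - j (xs k))"
      unfolding xhat xbar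
      by (simp add: linear_diff[OF j_linear] linear_add[OF j_linear] linear_scale[OF j_linear] algebra_simps)
    have step: "inner (j (xs k) - j (xs (k - 1))) (j w) = \<tau> * (avg_f \<tau> k f w - avg_A \<tau> k A (xs k) w)"
      using RG_step[OF k(2) w(1)] tau(1) unfolding inner_scaleR_left by (simp add: field_simps)
    have "inner (j (xhat \<tau> xs t - xbar \<tau> xs t)) (j w) = - \<mu> * inner (j (xs k) - j (xs (k - 1))) (j w)"
      unfolding jd by (simp add: inner_diff_left algebra_simps)
    also have "\<dots> = - (\<mu> * \<tau>) * (avg_f \<tau> k f w - avg_A \<tau> k A (xs k) w)"
      unfolding step by simp
    finally have "inner (j (xhat \<tau> xs t - xbar \<tau> xs t)) (j w)
        = - (\<mu> * \<tau>) * (avg_f \<tau> k f w - avg_A \<tau> k A (xs k) w)" .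
    then have "\<bar>inner (j (xhat \<tau> xs t - xbar \<tau> xs t)) (j w)\<bar>
        = \<mu> * \<tau> * \<bar>avg_f \<tau> k f w - avg_A \<tau> k A (xs k) w\<bar>"
      using \<mu> tau(1) by (simp add: abs_mult)
    also have "\<dots> \<le> \<tau> * (residual_const * (1 + residual_weight \<tau> (xs k) k) powr (1 - 1 / q))"
      using residual_abs_le[OF k(2) w(2)] \<mu> tau(1) by (intro mult_mono) (auto intro: mult_left_le_one_le)
    finally show ?thesis .
  qed
  then show "0 \<le> en_norm j (Vn n) (xhat \<tau> xs t - xbar \<tau> xs t)"
    and "en_norm j (Vn n) (xhat \<tau> xs t - xbar \<tau> xs t)
           \<le> \<tau> * (residual_const * (1 + residual_weight \<tau> (xs (nat \<lceil>t / \<tau>\<rceil>)) (nat \<lceil>t / \<tau>\<rceil>)) powr (1 - 1 / q))"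
    using en_norm_bounds[OF j_linear subspace_0[OF Vn_subspace]] k(1) by blast+
qed

lemma sum_residual_weight_le:
  "(\<Sum>k = 1..K. \<tau> * (1 + residual_weight \<tau> (xs k) k)) \<le> T + f_mass_total + growth_total"
proof -
  have "\<tau> * (1 + residual_weight \<tau> (xs k) k) = \<tau> + f_mass \<tau> k + \<tau> * growth (xs k)" for k
    unfolding residual_weight_def using tau(1) by (simp add: field_simps)
  then have "(\<Sum>k = 1..K. \<tau> * (1 + residual_weight \<tau> (xs k) k))
      = T + f_mass_total + (\<Sum>k = 1..K. \<tau> * growth (xs k))"
    using sum_f_mass K_mult_tau by (simp add: sum.distrib algebra_simps)
  then show ?thesis
    using sum_growth_le by simp
qed

lemma residual_Lp_le:
  "Lp_norm q_conj T (\<lambda>t. en_norm j (Vn n) (xhat \<tau> xs t - xbar \<tau> xs t)) \<le> \<tau> * residual_bound"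
proof -
  define \<beta> where "\<beta> k = 1 + residual_weight \<tau> (xs k) k" for k
  define R where "R = T + f_mass_total + growth_total"
  have q': "0 < q_conj" "(1 - 1 / q) * q_conj = 1"
    unfolding q_conj_def using pq by (simp_all add: field_simps)
  have \<beta>: "1 \<le> \<beta> k" for k
    unfolding \<beta>_def residual_weight_def using growth_nonneg tau(1) by (simp add: f_mass_def)
  have "Lp_norm q_conj T (\<lambda>t. en_norm j (Vn n) (xhat \<tau> xs t - xbar \<tau> xs t))
      \<le> (\<Sum>k = 1..K. \<tau> * (\<tau> * (residual_const * \<beta> k powr (1 - 1 / q))) powr q_conj) powr (1 / q_conj)"
    by (rule Lp_norm_le_grid_step[OF tau q'(1)])
       (use en_norm_increment_le tau(1) constants_nonneg in \<open>auto simp: \<beta>_def\<close>)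
  also have "(\<Sum>k = 1..K. \<tau> * (\<tau> * (residual_const * \<beta> k powr (1 - 1 / q))) powr q_conj)
      = (\<tau> * residual_const) powr q_conj * (\<Sum>k = 1..K. \<tau> * \<beta> k)"
  proof -
    have "(\<tau> * (residual_const * \<beta> k powr (1 - 1 / q))) powr q_conj = (\<tau> * residual_const) powr q_conj * \<beta> k"
      for k
      using tau(1) constants_nonneg(7) \<beta>[of k] q'
      by (simp add: powr_mult powr_powr mult.assoc[symmetric])
    then show ?thesis
      by (simp add: sum_distrib_left algebra_simps)
  qed
  also have "((\<tau> * residual_const) powr q_conj * (\<Sum>k = 1..K. \<tau> * \<beta> k)) powr (1 / q_conj)
      \<le> ((\<tau> * residual_const) powr q_conj * R) powr (1 / q_conj)"
  proof -
    have "0 \<le> (\<Sum>k = 1..K. \<tau> * \<beta> k)"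
      using tau(1) \<beta> by (auto intro!: sum_nonneg mult_nonneg_nonneg intro: order_trans[OF zero_le_one])
    moreover have "(\<Sum>k = 1..K. \<tau> * \<beta> k) \<le> R"
      using sum_residual_weight_le unfolding \<beta>_def R_def .
    ultimately show ?thesis
      using q'(1) by (intro powr_mono2 mult_left_mono) auto
  qed
  also have "\<dots> = \<tau> * residual_bound"
    unfolding residual_bound_def R_def using tau(1) constants_nonneg q'(1) T
    by (simp add: powr_mult powr_powr)
  finally show ?thesis .
qed

end

end

lemma uniform_bounds:
  "\<exists>M>0. \<forall>K n \<tau> (xs :: nat \<Rightarrow> 'x).
     \<tau> = T / real K \<and> 0 < \<tau> \<and> 4 * c1 * \<tau> < 1 \<and> RG_solution j A f (Vn n) \<tau> K (x0n n) xs \<longrightarrow>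
       LpLinf_norm p T j (xbar \<tau> xs) \<le> M \<and>
       Linf_norm T (\<lambda>t. j (xhat \<tau> xs t)) \<le> M \<and>
       (\<forall>y \<in> LpLq p q T j.
          \<bar>LINT t : {0<..<T} | lebesgue. blinfun_apply (A t (xbar \<tau> xs t)) (y t)\<bar>
            \<le> M * LpLq_norm p q T j y) \<and>
       Lp_norm (q / (q - 1)) T (\<lambda>t. en_norm j (Vn n) (xhat \<tau> xs t - xbar \<tau> xs t))
         \<le> \<tau> * (Lp_norm (p / (p - 1)) T f + M)"
proof -
  define M where "M = 1 + dissipation_bound powr (1 / p) + sqrt energy_bound
    + (growth_total + 2 * \<gamma>) + residual_bound"
  have nonneg: "0 \<le> dissipation_bound powr (1 / p)" "0 \<le> sqrt energy_bound"
    "0 \<le> growth_total + 2 * \<gamma>" "0 \<le> residual_bound"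
    using constants_nonneg constants by simp_all
  have "LpLinf_norm p T j (xbar \<tau> xs) \<le> M \<and>
       Linf_norm T (\<lambda>t. j (xhat \<tau> xs t)) \<le> M \<and>
       (\<forall>y \<in> LpLq p q T j.
          \<bar>LINT t : {0<..<T} | lebesgue. blinfun_apply (A t (xbar \<tau> xs t)) (y t)\<bar>
            \<le> M * LpLq_norm p q T j y) \<and>
       Lp_norm (q / (q - 1)) T (\<lambda>t. en_norm j (Vn n) (xhat \<tau> xs t - xbar \<tau> xs t))
         \<le> \<tau> * (Lp_norm (p / (p - 1)) T f + M)"
    if "\<tau> = T / real K" "0 < \<tau>" "4 * c1 * \<tau> < 1" "RG_solution j A f (Vn n) \<tau> K (x0n n) xs"
    for K n \<tau> and xs :: "nat \<Rightarrow> 'x"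
  proof (intro conjI ballI)
    have tau: "0 < \<tau>" "\<tau> = T / real K"
      using that(1,2) by auto
    show "LpLinf_norm p T j (xbar \<tau> xs) \<le> M"
      using xbar_Lp_norm_le[OF tau that(3,4)] j_xbar_Linf_le[OF tau that(3,4)] nonneg
      unfolding LpLinf_norm_def M_def by linarith
    show "Linf_norm T (\<lambda>t. j (xhat \<tau> xs t)) \<le> M"
      using j_xhat_Linf_le[OF tau that(3,4)] nonneg unfolding M_def by linarith
    fix y
    assume "y \<in> LpLq p q T j"
    moreover have "(growth_total + 2 * \<gamma>) * LpLq_norm p q T j y \<le> M * LpLq_norm p q T j y"
      using nonneg unfolding M_def LpLq_norm_def Lp_norm_def by (intro mult_right_mono) auto
    ultimately show "\<bar>LINT t : {0<..<T} | lebesgue. blinfun_apply (A t (xbar \<tau> xs t)) (y t)\<bar>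
        \<le> M * LpLq_norm p q T j y"
      using pairing_le[OF tau that(3,4)] by fastforce
  next
    have tau: "0 < \<tau>" "\<tau> = T / real K"
      using that(1,2) by auto
    have "residual_bound \<le> Lp_norm (p / (p - 1)) T f + M"
      using nonneg unfolding M_def Lp_norm_def by simp
    then show "Lp_norm (q / (q - 1)) T (\<lambda>t. en_norm j (Vn n) (xhat \<tau> xs t - xbar \<tau> xs t))
        \<le> \<tau> * (Lp_norm (p / (p - 1)) T f + M)"
      using residual_Lp_le[OF tau that(3,4)] tau(1) unfolding q_conj_def
      by (meson mult_left_mono order_trans less_imp_le)
  qed
  moreover have "0 < M"
    using nonneg unfolding M_def by linarith
  ultimately show ?thesis
    by blast
qed

end

theorem mainTheorem8:
  fixes j :: "'x::banach \<Rightarrow> 'y::{real_inner, complete_space}"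
    and V :: "'x set" and H :: "'y set"
    and Vn :: "nat \<Rightarrow> 'x set"
    and T p q c0 c1 c2 lam \<gamma> :: real
    and x0 :: 'y and x0n :: "nat \<Rightarrow> 'x"
    and f :: "real \<Rightarrow> ('x \<Rightarrow>\<^sub>L real)"
    and A :: "real \<Rightarrow> 'x \<Rightarrow> ('x \<Rightarrow>\<^sub>L real)"
  assumes T: "0 < T"
    and pq: "1 < p" "p \<le> q"
    \<comment> \<open>(i) evolution triples (X,Y,j) and (V,H,j)\<close>
    and X_refl: "reflexive_space TYPE('x)"
    and j_lin: "bounded_linear j" and j_inj: "inj j" and j_dense: "closure (range j) = UNIV"
    and V_sub: "subspace V" and V_closed: "closed V"
    and H_sub: "subspace H" and H_closed: "closed H"
    and jV: "j ` V \<subseteq> H" and jV_dense: "H \<subseteq> closure (j ` V)"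
    \<comment> \<open>(i) quasi non-conforming approximation (V_n)\<close>
    and Vn_sub: "\<And>n. subspace (Vn n)" and Vn_closed: "\<And>n. closed (Vn n)"
    and QNC1: "\<exists>D\<subseteq>V. V \<subseteq> closure D \<and>
                 (\<forall>v\<in>D. \<exists>vs. (\<forall>n. vs n \<in> Vn n) \<and> vs \<longlonglongrightarrow> v)"
    and QNC2: "\<And>(xs :: nat \<Rightarrow> real \<Rightarrow> 'x) (m :: nat \<Rightarrow> nat) x.
                 (\<forall>i. xs i \<in> LpV p T (Vn (m i))) \<Longrightarrow> filterlim m at_top sequentially \<Longrightarrow>
                 Lp_weak_conv p T xs x \<Longrightarrow> x \<in> LpV p T V"
    \<comment> \<open>(ii) initial data\<close>
    and x0: "x0 \<in> H" and x0n: "\<And>n. x0n n \<in> Vn n"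
    and x0n_conv: "(\<lambda>n. j (x0n n)) \<longlonglongrightarrow> x0"
    and x0n_bd: "\<And>n. norm (j (x0n n)) \<le> norm x0"
    \<comment> \<open>(iii) right-hand side\<close>
    and f: "f \<in> Lp (p / (p - 1)) T"
    \<comment> \<open>(iv) the operator family\<close>
    and A1: "AE t in lebesgue. t \<in> {0<..<T} \<longrightarrow> pseudo_monotone (A t)"
    and A2: "\<And>x. bochner_measurable T (\<lambda>t. A t x)"
    and cst: "0 < c0" "0 \<le> c1" "0 \<le> c2" "0 \<le> \<gamma>" "0 < lam" "lam < c0"
    and A3: "AE t in lebesgue. t \<in> {0<..<T} \<longrightarrow>
               (\<forall>x. blinfun_apply (A t x) x \<ge> c0 * norm x powr p - c1 * (norm (j x))\<^sup>2 - c2)"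
    and A4: "AE t in lebesgue. t \<in> {0<..<T} \<longrightarrow>
               (\<forall>x y. \<bar>blinfun_apply (A t x) y\<bar> \<le> lam * norm x powr p
                  + \<gamma> * (1 + norm (j x) powr q + norm (j y) powr q + norm y powr p))"
  shows "\<exists>M>0. \<forall>K n \<tau> (xs :: nat \<Rightarrow> 'x).
           \<tau> = T / real K \<and> 0 < \<tau> \<and> 4 * c1 * \<tau> < 1 \<and>
           RG_solution j A f (Vn n) \<tau> K (x0n n) xs \<longrightarrow>
             LpLinf_norm p T j (xbar \<tau> xs) \<le> M \<and>
             Linf_norm T (\<lambda>t. j (xhat \<tau> xs t)) \<le> M \<and>
             (\<forall>y \<in> LpLq p q T j.
                \<bar>LINT t : {0<..<T} | lebesgue. blinfun_apply (A t (xbar \<tau> xs t)) (y t)\<bar>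
                  \<le> M * LpLq_norm p q T j y) \<and>
             Lp_norm (q / (q - 1)) T (\<lambda>t. en_norm j (Vn n) (xhat \<tau> xs t - xbar \<tau> xs t))
               \<le> \<tau> * (Lp_norm (p / (p - 1)) T f + M)"
proof -
  obtain Kj where Kj: "0 < Kj" "\<And>x. norm (j x) \<le> Kj * norm x"
    using bounded_linear.pos_bounded[OF j_lin] by (auto simp: mult.commute)
  obtain F where F: "F \<in> borel_measurable lebesgue" "\<And>t. 0 \<le> F t"
    "AE t in lebesgue. t \<in> {0<..<T} \<longrightarrow> norm (f t) = F t"
    using bochner_measurable_norm_AE_eq_measurable f unfolding Lp_def by blast
  have "(\<integral>\<^sup>+ t \<in> {0<..<T}. ennreal (F t powr (p / (p - 1))) \<partial>lebesgue) < \<infinity>"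
    using f Lp_int_AE_cong[OF F(3)] unfolding Lp_def by simp
  then interpret rothe_galerkin_bounds j Vn T p q c0 c1 c2 lam \<gamma> Kj x0 x0n f F A
    using T pq bounded_linear.linear[OF j_lin] Kj Vn_sub x0n_bd F A2 cst A3 A4
    by (intro rothe_galerkin_bounds.intro) auto
  show ?thesis
    by (rule uniform_bounds)
qed

end
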